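(* Consider the problem $\min_{x\in\mathbb{R}^n}\max_{y\in\Delta}F(x)^Ty$ with Assumption A, the strict complementarity assumption, and either the bounded level set assumption or boundedness of $\{z^t\}$. Let Smoothed-GDA be run with parameters $$p>3L,\ c<\frac{1}{p+L},\ \alpha<\min\Big\{\frac{1}{11L},\frac{c^2(p-L)^2}{4L(1+c(p-L))^2}\Big\},\ \beta\le\min\Big\{\frac1{36},\frac{(p-L)^2}{384p(p+L)^2}\Big\}.$$ Then there is a constant $\beta'>0$ such that, if in addition $\beta<\beta'$, for every $t\ge0$ $$\phi^t-\phi^{t+1}\ge\frac1{16c}\|x^t-x^{t+1}\|^2+\frac1{16\alpha}\|y^t-y^t_+(z^t)\|^2+\frac{p}{16\beta}\|z^t-z^{t+1}\|^2.$$
   Context: $F(x)=(f_1(x),\dots,f_m(x))^T$ is a smooth map $\mathbb{R}^n\to\mathbb{R}^m$, $\Delta$ the probability simplex in $\mathbb{R}^m$, $f(x,y)=F(x)^Ty$. Assumption A: $\nabla_xf,\nabla_yf$ are $L$-Lipschitz ($L>0$), $\psi(x)=\max_if_i(x)$ is bounded below by a finite constant. KKT system for $(x^*,y^* )$ with multipliers $\mu\in\mathbb{R},\nu\in\mathbb{R}^m$: $\sum_iy^*_i\nabla f_i(x^* )=0$, $\sum_iy_i^*=1$, $y_i^*\ge0$, $\mu-\nu_i=f_i(x^* )$, $\nu_i\ge0$, $\nu_iy_i^*=0$. Strict complementarity: every solution of the KKT system has $\nu_i>0$ whenever $y^*_i=0$. Bounded level set assumption: $\{x:\psi(x)\le R\}$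 bounded for all $R>0$. $K(x,z;y)=f(x,y)+\frac p2\|x-z\|^2$; $x(y,z)=\arg\min_xK(x,z;y)$; $d(y,z)=\min_xK(x,z;y)$; $P(z)=\min_x\max_{y\in\Delta}K(x,z;y)$; $\phi(x,y,z)=K(x,z;y)-2d(y,z)+2P(z)$. Smoothed-GDA: $x^{t+1}=x^t-c\nabla_xK(x^t,z^t;y^t)$, $y^{t+1}=P_\Delta(y^t+\alpha\nabla_yK(x^{t+1},z^t;y^t))$, $z^{t+1}=z^t+\beta(x^{t+1}-z^t)$; $\phi^t=\phi(x^t,y^t,z^t)$, $y^t_+(z^t)=P_\Delta(y^t+\alpha\nabla_yK(x(y^t,z^t),z^t;y^t))$. *)

theory Defs
  imports "HOL-Analysis.Analysis"
begin

text \<open>Problem data: F : R^n -> R^m (F x $ i = f_i x), gF i x = gradient of f_i at x.\<close>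

definition prob_simplex :: "(real^'m) set" where
  "prob_simplex = {y. (\<forall>i. 0 \<le> y $ i) \<and> (\<Sum>i\<in>UNIV. y $ i) = 1}"

definition proj_simplex :: "real^'m \<Rightarrow> real^'m" where
  "proj_simplex v = closest_point prob_simplex v"

definition fval :: "(real^'n \<Rightarrow> real^'m) \<Rightarrow> real^'n \<Rightarrow> real^'m \<Rightarrow> real" where
  "fval F x y = F x \<bullet> y"

definition gradx_f :: "('m \<Rightarrow> real^'n \<Rightarrow> real^'n) \<Rightarrow> real^'n \<Rightarrow> real^'m \<Rightarrow> real^'n" where
  "gradx_f gF x y = (\<Sum>i\<in>UNIV. y $ i *\<^sub>R gF i x)"

definition psi :: "(real^'n \<Rightarrow> real^'m) \<Rightarrow> real^'n \<Rightarrow> real" where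
  "psi F x = Max (range (\<lambda>i. F x $ i))"

definition KKT :: "(real^'n \<Rightarrow> real^'m) \<Rightarrow> ('m \<Rightarrow> real^'n \<Rightarrow> real^'n)
    \<Rightarrow> real^'n \<Rightarrow> real^'m \<Rightarrow> real \<Rightarrow> real^'m \<Rightarrow> bool" where
  "KKT F gF x y \<mu> \<nu> \<longleftrightarrow>
     (\<Sum>i\<in>UNIV. y $ i *\<^sub>R gF i x) = 0 \<and> (\<Sum>i\<in>UNIV. y $ i) = 1 \<and>
     (\<forall>i. 0 \<le> y $ i) \<and> (\<forall>i. \<mu> - \<nu> $ i = F x $ i) \<and>
     (\<forall>i. 0 \<le> \<nu> $ i) \<and> (\<forall>i. \<nu> $ i * y $ i = 0)"

definition strict_complementarity :: "(real^'n \<Rightarrow> real^'m) \<Rightarrow> ('m \<Rightarrow> real^'n \<Rightarrow> real^'n) \<Rightarrow> bool" where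
  "strict_complementarity F gF \<longleftrightarrow>
     (\<forall>x y \<mu> \<nu>. KKT F gF x y \<mu> \<nu> \<longrightarrow> (\<forall>i. y $ i = 0 \<longrightarrow> \<nu> $ i > 0))"

definition bounded_level_sets :: "(real^'n \<Rightarrow> real^'m) \<Rightarrow> bool" where
  "bounded_level_sets F \<longleftrightarrow> (\<forall>R>0. bounded {x. psi F x \<le> R})"

definition Kfun :: "(real^'n \<Rightarrow> real^'m) \<Rightarrow> real \<Rightarrow> real^'n \<Rightarrow> real^'n \<Rightarrow> real^'m \<Rightarrow> real" where
  "Kfun F p x z y = fval F x y + p / 2 * (norm (x - z))\<^sup>2"

definition xopt :: "(real^'n \<Rightarrow> real^'m) \<Rightarrow> real \<Rightarrow> real^'m \<Rightarrow> real^'n \<Rightarrow> real^'n" where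
  "xopt F p y z = (SOME x. \<forall>x'. Kfun F p x z y \<le> Kfun F p x' z y)"

definition dfun :: "(real^'n \<Rightarrow> real^'m) \<Rightarrow> real \<Rightarrow> real^'m \<Rightarrow> real^'n \<Rightarrow> real" where
  "dfun F p y z = (INF x. Kfun F p x z y)"

definition Pfun :: "(real^'n \<Rightarrow> real^'m) \<Rightarrow> real \<Rightarrow> real^'n \<Rightarrow> real" where
  "Pfun F p z = (INF x. SUP y\<in>prob_simplex. Kfun F p x z y)"

definition phi :: "(real^'n \<Rightarrow> real^'m) \<Rightarrow> real \<Rightarrow> real^'n \<Rightarrow> real^'m \<Rightarrow> real^'n \<Rightarrow> real" where
  "phi F p x y z = Kfun F p x z y - 2 * dfun F p y z + 2 * Pfun F p z"

definition gradx_K :: "('m \<Rightarrow> real^'n \<Rightarrow> real^'n) \<Rightarrow> real \<Rightarrow> real^'n \<Rightarrow> real^'n \<Rightarrow> real^'m \<Rightarrow> real^'n" where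
  "gradx_K gF p x z y = gradx_f gF x y + p *\<^sub>R (x - z)"

definition smoothed_gda :: "(real^'n \<Rightarrow> real^'m) \<Rightarrow> ('m \<Rightarrow> real^'n \<Rightarrow> real^'n)
   \<Rightarrow> real \<Rightarrow> real \<Rightarrow> real \<Rightarrow> real
   \<Rightarrow> (nat \<Rightarrow> real^'n) \<Rightarrow> (nat \<Rightarrow> real^'m) \<Rightarrow> (nat \<Rightarrow> real^'n) \<Rightarrow> bool" where
  "smoothed_gda F gF p c \<alpha> \<beta> xs ys zs \<longleftrightarrow>
     (\<forall>t. xs (Suc t) = xs t - c *\<^sub>R gradx_K gF p (xs t) (zs t) (ys t) \<and>
          ys (Suc t) = proj_simplex (ys t + \<alpha> *\<^sub>R F (xs (Suc t))) \<and>
          zs (Suc t) = zs t + \<beta> *\<^sub>R (xs (Suc t) - zs t))"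

end

(*
  The potential phi = K - 2 d + 2 P decreases because each step of Smoothed-GDA is a descent
  step up to coupling errors. K(., z; y) is (p + L)-smooth and (p - L)-strongly convex, so the
  x-step decreases K by |x - x'|^2 / (2 c); the y-step is a projected gradient step for the concave
  dual function d(., z), whose gradient is F(x(y, z)); and the z-step moves z towards x, which
  controls the change of P, the minimum of the proximal max-function. Young's inequality absorbs
  all coupling terms but one, |x(y_+(z), z) - x*(z)|, which needs a dual error bound: on bounded
  sets of z it is at most eps |z - x(y, z)| + C |y - y_+(z)|. Otherwise a compactness argument
  produces a limit KKT point together with a nonzero direction v with sum v = 0, supported where
  the multipliers vanish and annihilated by the gradients, contradicting strict complementarity.
  Since phi dominates P(z), the z-iterates stay bounded when the level sets of psi are.
*)

theory Submission
  imports Defs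
begin

section \<open>The probability simplex\<close>

lemma prob_simplex_iff: "y \<in> prob_simplex \<longleftrightarrow> (\<forall>i. 0 \<le> y $ i) \<and> (\<Sum>i\<in>UNIV. y $ i) = 1"
  by (simp add: prob_simplex_def)

lemma axis_in_prob_simplex: "axis i 1 \<in> (prob_simplex :: (real^'m) set)"
  by (simp add: prob_simplex_iff axis_def sum.delta)

lemma prob_simplex_nonempty: "(prob_simplex :: (real^'m) set) \<noteq> {}"
  using axis_in_prob_simplex by blast

lemma closed_prob_simplex: "closed (prob_simplex :: (real^'m) set)"
proof -
  have "prob_simplex = (\<Inter>i. {y::real^'m. 0 \<le> y $ i}) \<inter> {y. (\<Sum>i\<in>UNIV. y $ i) = 1}"
    by (auto simp: prob_simplex_iff)
  moreover have "closed {y::real^'m. (\<Sum>i\<in>UNIV. y $ i) = 1}"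
    by (intro closed_Collect_eq continuous_intros)
  moreover have "closed (\<Inter>i. {y::real^'m. 0 \<le> y $ i})"
    by (intro closed_INT ballI closed_Collect_le continuous_intros)
  ultimately show ?thesis by (metis closed_Int)
qed

lemma convex_prob_simplex: "convex (prob_simplex :: (real^'m) set)"
proof (rule convexI)
  fix x y :: "real^'m" and u v :: real
  assume "x \<in> prob_simplex" "y \<in> prob_simplex" "0 \<le> u" "0 \<le> v" "u + v = 1"
  then show "u *\<^sub>R x + v *\<^sub>R y \<in> prob_simplex"
    by (simp add: prob_simplex_iff sum.distrib sum_distrib_left[symmetric])
qed

lemma norm_prob_simplex_le: "y \<in> prob_simplex \<Longrightarrow> norm (y::real^'m) \<le> 1"
  using norm_le_l1_cart[of y] by (simp add: prob_simplex_iff)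

lemma norm_diff_prob_simplex_le: "y \<in> prob_simplex \<Longrightarrow> y' \<in> prob_simplex \<Longrightarrow> norm (y - (y'::real^'m)) \<le> 2"
  using norm_prob_simplex_le[of y] norm_prob_simplex_le[of y'] norm_triangle_ineq4[of y y'] by linarith

lemma compact_prob_simplex: "compact (prob_simplex :: (real^'m) set)"
  using norm_prob_simplex_le closed_prob_simplex by (auto simp: compact_eq_bounded_closed bounded_iff)

lemma proj_simplex_in: "proj_simplex v \<in> prob_simplex"
  unfolding proj_simplex_def by (rule closest_point_in_set[OF closed_prob_simplex prob_simplex_nonempty])

lemma proj_simplex_obtuse: "w \<in> prob_simplex \<Longrightarrow> (v - proj_simplex v) \<bullet> (w - proj_simplex v) \<le> 0"
  unfolding proj_simplex_def by (rule closest_point_dot[OF convex_prob_simplex closed_prob_simplex])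

lemma proj_simplex_nonexpansive: "norm (proj_simplex v - proj_simplex w) \<le> norm (v - w)"
  using closest_point_lipschitz[OF convex_prob_simplex closed_prob_simplex prob_simplex_nonempty, of v w]
  by (simp add: proj_simplex_def dist_norm)

lemma isCont_proj_simplex: "isCont (proj_simplex :: real^'m \<Rightarrow> real^'m) v"
proof -
  have "continuous_on UNIV (proj_simplex :: real^'m \<Rightarrow> real^'m)"
    by (rule lipschitz_on_continuous_on[OF lipschitz_onI[of UNIV proj_simplex 1]])
      (auto simp: dist_norm proj_simplex_nonexpansive)
  then show ?thesis by (simp add: continuous_on_eq_continuous_at)
qed

lemma inner_prob_simplex_le_Max: "y \<in> prob_simplex \<Longrightarrow> g \<bullet> y \<le> Max (range (\<lambda>i. (g::real^'m) $ i))"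
proof -
  assume y: "y \<in> prob_simplex"
  have "g \<bullet> y = (\<Sum>i\<in>UNIV. g $ i * y $ i)" by (simp add: inner_vec_def)
  also have "\<dots> \<le> (\<Sum>i\<in>UNIV. Max (range (\<lambda>i. g $ i)) * y $ i)"
    using y by (intro sum_mono mult_right_mono) (auto simp: prob_simplex_iff)
  also have "\<dots> = Max (range (\<lambda>i. g $ i))" using y by (simp add: prob_simplex_iff sum_distrib_left[symmetric])
  finally show ?thesis .
qed

lemma ex_component_eq_Max: "\<exists>i. Max (range (\<lambda>i. (g::real^'m) $ i)) = g $ i"
proof -
  have "Max (range (\<lambda>i. g $ i)) \<in> range (\<lambda>i. g $ i)" by (intro Max_in) auto
  then show ?thesis by blast
qed

lemma prob_simplex_not_pos_eq_0: "y \<in> prob_simplex \<Longrightarrow> \<not> y $ i > 0 \<Longrightarrow> y $ i = 0"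
  by (metis order.antisym not_less prob_simplex_iff)

lemma mass_shift_in_prob_simplex:
  assumes y: "y \<in> prob_simplex" and "i \<noteq> j" "0 \<le> t" "t \<le> y $ i"
  shows "y + t *\<^sub>R (axis j 1 - axis i 1) \<in> prob_simplex"
proof -
  have "(\<Sum>k\<in>UNIV. t * ((axis j 1 - axis i 1) $ k)) = 0"
    by (simp add: sum_distrib_left[symmetric] sum_subtractf axis_def sum.delta)
  then show ?thesis
    using assms by (auto simp: prob_simplex_iff axis_def sum.distrib)
qed

lemma simplex_variational_support:
  assumes y: "y \<in> prob_simplex" and vi: "\<And>w. w \<in> prob_simplex \<Longrightarrow> g \<bullet> (w - y) \<le> 0"
    and pos: "y $ i > 0"
  shows "(g::real^'m) $ j \<le> g $ i"
proof (cases "j = i")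
  case False
  have "y $ i * (g \<bullet> (axis j 1 - axis i 1)) \<le> 0"
    using vi[OF mass_shift_in_prob_simplex[OF y _ _ order_refl]] False pos by auto
  then show ?thesis
    using pos by (simp add: mult_le_0_iff inner_diff_right inner_axis)
qed simp

lemma proj_simplex_support:
  "proj_simplex v $ i > 0 \<Longrightarrow> (v - proj_simplex v) $ j \<le> (v - proj_simplex v) $ i"
  by (rule simplex_variational_support[OF proj_simplex_in proj_simplex_obtuse])

lemma proj_simplex_step_inner:
  assumes y: "y \<in> prob_simplex" and \<alpha>: "0 < \<alpha>"
  shows "(norm (y - proj_simplex (y + \<alpha> *\<^sub>R g)))\<^sup>2 / \<alpha> \<le> g \<bullet> (proj_simplex (y + \<alpha> *\<^sub>R g) - y)"
proof -
  let ?y' = "proj_simplex (y + \<alpha> *\<^sub>R g)"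
  have "((y + \<alpha> *\<^sub>R g) - ?y') \<bullet> (y - ?y') \<le> 0" by (rule proj_simplex_obtuse[OF y])
  moreover have "((y + \<alpha> *\<^sub>R g) - ?y') \<bullet> (y - ?y') = (norm (y - ?y'))\<^sup>2 - \<alpha> * (g \<bullet> (?y' - y))"
    by (simp add: power2_norm_eq_inner inner_diff_left inner_diff_right inner_add_left algebra_simps)
  ultimately show ?thesis using \<alpha> by (simp add: field_simps)
qed

lemma smoothed_gda_ys_in_prob_simplex:
  "smoothed_gda F gF p c \<alpha> \<beta> xs ys zs \<Longrightarrow> ys 0 \<in> prob_simplex \<Longrightarrow> ys t \<in> prob_simplex"
  by (cases t) (auto simp: smoothed_gda_def proj_simplex_in)

section \<open>Real and vector inequalities\<close>

lemma le_divide_if_mult_sq_le: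
  fixes m u g :: real
  assumes "0 < m" "m * u\<^sup>2 \<le> g * u" "0 \<le> g" "0 \<le> u"
  shows "u \<le> g / m"
proof (cases "u = 0")
  case False
  then have "m * u \<le> g"
    using assms mult_right_le_imp_le[of "m * u" u g] by (simp add: power2_eq_square mult.assoc)
  then show ?thesis using assms by (simp add: field_simps)
qed (use assms in simp)

lemma gradient_upper_quadratic_bound:
  fixes f :: "'a::real_inner \<Rightarrow> real"
  assumes der: "\<And>x. (f has_derivative (\<lambda>h. G x \<bullet> h)) (at x)"
    and mono: "\<And>u v. (G u - G v) \<bullet> (u - v) \<le> M * (norm (u - v))\<^sup>2"
  shows "f (a + d) \<le> f a + G a \<bullet> d + M / 2 * (norm d)\<^sup>2"
proof -
  define h where "h s = f (a + s *\<^sub>R d) - s * (G a \<bullet> d) - M / 2 * s\<^sup>2 * (norm d)\<^sup>2" for s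
  have "((\<lambda>s. f (a + s *\<^sub>R d)) has_derivative (\<lambda>t. G (a + s *\<^sub>R d) \<bullet> (t *\<^sub>R d))) (at s)" for s
    by (rule has_derivative_compose[OF _ der]) (auto intro!: derivative_eq_intros)
  then have "DERIV (\<lambda>s. f (a + s *\<^sub>R d)) s :> G (a + s *\<^sub>R d) \<bullet> d" for s
    by (simp add: has_field_derivative_def mult_commute_abs)
  then have D: "DERIV h s :> (G (a + s *\<^sub>R d) - G a) \<bullet> d - M * s * (norm d)\<^sup>2" for s
    unfolding h_def by (auto intro!: derivative_eq_intros simp: power2_eq_square inner_diff_left)
  have "(G (a + s *\<^sub>R d) - G a) \<bullet> d \<le> M * s * (norm d)\<^sup>2" if "0 < s" for s
  proof -
    have "s * ((G (a + s *\<^sub>R d) - G a) \<bullet> d) \<le> s * (M * s * (norm d)\<^sup>2)"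
      using mono[of "a + s *\<^sub>R d" a] that by (simp add: power2_eq_square algebra_simps)
    then show ?thesis using that by simp
  qed
  then have nonpos: "(G (a + s *\<^sub>R d) - G a) \<bullet> d - M * s * (norm d)\<^sup>2 \<le> 0" if "0 \<le> s" for s
    using that by (cases "s = 0") auto
  have "h 1 \<le> h 0"
  proof (rule DERIV_nonpos_imp_nonincreasing[of 0 1 h])
    fix s :: real assume "0 \<le> s" "s \<le> 1"
    then show "\<exists>y. DERIV h s :> y \<and> y \<le> 0" using D[of s] nonpos[of s] by blast
  qed simp
  then show ?thesis by (simp add: h_def)
qed

lemma gradient_lower_quadratic_bound:
  fixes f :: "'a::real_inner \<Rightarrow> real"
  assumes der: "\<And>x. (f has_derivative (\<lambda>h. G x \<bullet> h)) (at x)"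
    and mono: "\<And>u v. (G u - G v) \<bullet> (u - v) \<ge> M * (norm (u - v))\<^sup>2"
  shows "f (a + d) \<ge> f a + G a \<bullet> d + M / 2 * (norm d)\<^sup>2"
proof -
  have "(\<lambda>x. - f x) (a + d) \<le> - f a + (- G a) \<bullet> d + (- M) / 2 * (norm d)\<^sup>2"
  proof (rule gradient_upper_quadratic_bound)
    show "((\<lambda>x. - f x) has_derivative (\<lambda>h. (- G x) \<bullet> h)) (at x)" for x
      using has_derivative_minus[OF der[of x]] by simp
    show "(- G u - - G v) \<bullet> (u - v) \<le> - M * (norm (u - v))\<^sup>2" for u v
      using mono[of u v] by (simp add: inner_diff_left)
  qed
  then show ?thesis by simp
qed

lemma norm_diff_sq_shift:
  "(norm (w - z'))\<^sup>2 - (norm (w - z))\<^sup>2 = -2 * ((w - z) \<bullet> (z' - z)) + (norm (z' - z))\<^sup>2"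
proof -
  have "w - z' = (w - z) - (z' - z)" by simp
  then have "(norm (w - z'))\<^sup>2 = (norm (w - z))\<^sup>2 - 2 * ((w - z) \<bullet> (z' - z)) + (norm (z' - z))\<^sup>2"
    by (simp only: power2_norm_eq_inner inner_diff_left inner_diff_right) (simp add: inner_commute)
  then show ?thesis by simp
qed

lemma tendsto_zero_if_sq_le:
  fixes f :: "nat \<Rightarrow> real"
  assumes le: "\<And>k. (f k)\<^sup>2 \<le> g k" and g: "g \<longlonglongrightarrow> 0"
  shows "f \<longlonglongrightarrow> 0"
proof (rule Lim_null_comparison)
  show "\<forall>\<^sub>F k in sequentially. norm (f k) \<le> sqrt (g k)"
    using real_sqrt_le_mono[OF le] by simp
  show "(\<lambda>k. sqrt (g k)) \<longlonglongrightarrow> 0"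
    using tendsto_real_sqrt[OF g] by simp
qed

lemma descent_invariant:
  fixes f g :: "nat \<Rightarrow> real"
  assumes lower: "\<And>t. g t \<le> f t" and inside: "\<And>t. g t \<le> f 0 \<Longrightarrow> Q t"
    and descent: "\<And>t. Q t \<Longrightarrow> f (Suc t) \<le> f t"
  shows "Q t"
proof -
  have "Q t \<and> f t \<le> f 0"
  proof (induction t)
    case 0
    then show ?case using inside lower[of 0] by simp
  next
    case (Suc t)
    then have "f (Suc t) \<le> f 0" using descent[of t] by linarith
    then show ?case using inside lower[of "Suc t"] by force
  qed
  then show ?thesis ..
qed

lemma sq_ratio_le:
  fixes u e w m c k :: real
  assumes "0 < u" "0 < w" "0 < m" "0 \<le> e" "0 < k"
    and "k * e\<^sup>2 \<le> u\<^sup>2" and "m * u\<^sup>2 \<le> c * e * w"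
  shows "(u / w)\<^sup>2 \<le> (c / m)\<^sup>2 / k"
proof -
  have "(m * u\<^sup>2)\<^sup>2 \<le> (c * e * w)\<^sup>2"
    using assms by (intro power_mono) auto
  then have "m\<^sup>2 * u\<^sup>2 * u\<^sup>2 \<le> c\<^sup>2 * w\<^sup>2 * e\<^sup>2"
    by (simp add: power_mult_distrib power2_eq_square algebra_simps)
  also have "\<dots> \<le> c\<^sup>2 * w\<^sup>2 * (u\<^sup>2 / k)"
    using assms by (intro mult_left_mono) (auto simp: field_simps)
  finally have "m\<^sup>2 * u\<^sup>2 \<le> c\<^sup>2 * w\<^sup>2 / k"
    using assms by (simp add: field_simps power2_eq_square)
  then show ?thesis using assms by (simp add: field_simps power_divide)
qed

lemma young_ineq:
  fixes x y k :: real
  assumes "0 < k"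
  shows "2 * x * y \<le> k * x\<^sup>2 + y\<^sup>2 / k"
proof -
  have "0 \<le> (k * x - y)\<^sup>2 / k" using assms by simp
  also have "\<dots> = k * x\<^sup>2 - 2 * x * y + y\<^sup>2 / k" using assms by (simp add: power2_eq_square field_simps)
  finally show ?thesis by simp
qed

lemma sq_add_le: "((x::real) + y)\<^sup>2 \<le> 2 * x\<^sup>2 + 2 * y\<^sup>2"
  by (smt (verit, best) power2_sum sum_squares_bound)

lemma y_coupling_bound:
  fixes a b e c \<alpha> L \<mu> \<sigma> :: real
  assumes c: "0 < c" "4 * c * L \<le> 1" and \<alpha>: "0 < \<alpha>" "\<alpha> * (11 * L) < 1" "\<alpha> * (4 * L * \<sigma>\<^sup>2) < 1"
    and L: "0 < L" "2 * L \<le> \<mu>" and e: "0 \<le> e" "e \<le> b + \<alpha> * L * \<sigma> * a"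
  shows "2 * L * (L / \<mu> * b + \<sigma> * a) * b + e\<^sup>2 / \<alpha> / 8 \<le> 27 / 32 * (b\<^sup>2 / \<alpha>) + 9 / 64 * (a\<^sup>2 / c)"
proof -
  have "2 * L * (L / \<mu> * b) * b = (2 * L / \<mu>) * L * b\<^sup>2" by (simp add: power2_eq_square)
  also have "\<dots> \<le> 1 * (1 / (11 * \<alpha>)) * b\<^sup>2"
    using L \<alpha> by (intro mult_right_mono mult_mono) (auto simp: field_simps)
  finally have yy_term: "2 * L * (L / \<mu> * b) * b \<le> b\<^sup>2 / \<alpha> / 11" by simp
  have L\<sigma>: "L * \<sigma>\<^sup>2 \<le> 1 / (4 * \<alpha>)" using \<alpha> by (simp add: field_simps)
  have "2 * L * (\<sigma> * a) * b = 2 * a * (L * \<sigma> * b)" by simp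
  also have "\<dots> \<le> 1 / (8 * c) * a\<^sup>2 + (L * \<sigma> * b)\<^sup>2 / (1 / (8 * c))"
    by (rule young_ineq) (use c in simp)
  also have "(L * \<sigma> * b)\<^sup>2 / (1 / (8 * c)) = b\<^sup>2 * ((8 * c * L) * (L * \<sigma>\<^sup>2))"
    by (simp add: power2_eq_square)
  also have "\<dots> \<le> b\<^sup>2 * (2 * (1 / (4 * \<alpha>)))"
    using c L L\<sigma> by (intro mult_left_mono mult_mono) (auto simp: mult_ac)
  finally have xy_term: "2 * L * (\<sigma> * a) * b \<le> a\<^sup>2 / c / 8 + b\<^sup>2 / \<alpha> / 2" by simp
  have "e\<^sup>2 \<le> 2 * b\<^sup>2 + 2 * (\<alpha> * L * \<sigma> * a)\<^sup>2"
    using power_mono[OF e(2) e(1), of 2] sq_add_le[of b "\<alpha> * L * \<sigma> * a"] by linarith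
  also have "2 * (\<alpha> * L * \<sigma> * a)\<^sup>2 = 2 * \<alpha> * (c * L) * (\<alpha> * L * \<sigma>\<^sup>2) * (a\<^sup>2 / c)"
    using c by (simp add: power2_eq_square)
  also have "\<dots> \<le> 2 * \<alpha> * (1 / 4) * (1 / 4) * (a\<^sup>2 / c)"
    using c \<alpha> L L\<sigma> by (intro mult_right_mono mult_mono mult_left_mono) (auto simp: field_simps)
  finally have e_term: "e\<^sup>2 / \<alpha> \<le> 2 * (b\<^sup>2 / \<alpha>) + a\<^sup>2 / c / 8"
    using \<alpha> by (simp add: field_simps)
  have split: "2 * L * (L / \<mu> * b + \<sigma> * a) * b = 2 * L * (L / \<mu> * b) * b + 2 * L * (\<sigma> * a) * b"
    by (simp add: algebra_simps)
  have combine: "X = Y1 + Y2 \<Longrightarrow> Y1 \<le> B / 11 \<Longrightarrow> Y2 \<le> A / 8 + B / 2 \<Longrightarrow> E \<le> 2 * B + A / 8 \<Longrightarrow> 0 \<le> B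
      \<Longrightarrow> X + E / 8 \<le> 27 / 32 * B + 9 / 64 * A" for X Y1 Y2 E A B :: real
    by linarith
  show ?thesis by (rule combine[OF split yy_term xy_term e_term]) (use \<alpha> in simp)
qed

lemma prox_error_term_bound:
  fixes a e s U D c \<alpha> \<beta> p C \<sigma> :: real
  assumes pos: "0 < c" "0 < \<alpha>" "0 < \<beta>" "0 < p" "0 \<le> C" "0 \<le> D"
    and \<beta>: "\<beta> * (2 * c * p * \<sigma>\<^sup>2) \<le> 1" "\<beta> * (128 * p * \<alpha> * C) \<le> 1"
    and U: "U\<^sup>2 \<le> 1 / 128 * D\<^sup>2 + C * e\<^sup>2" and D: "D \<le> s / \<beta> + \<sigma> * a"
  shows "2 * p * U * s \<le> p * s\<^sup>2 / \<beta> / 4 + a\<^sup>2 / c / 16 + e\<^sup>2 / \<alpha> / 16"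
proof -
  have "2 * U * s \<le> 8 * \<beta> * U\<^sup>2 + s\<^sup>2 / (8 * \<beta>)" by (rule young_ineq) (use pos in simp)
  then have "p * (2 * U * s) \<le> p * (8 * \<beta> * U\<^sup>2 + s\<^sup>2 / (8 * \<beta>))"
    using pos by (intro mult_left_mono) auto
  then have young: "2 * p * U * s \<le> p * s\<^sup>2 / \<beta> / 8 + 8 * p * \<beta> * U\<^sup>2"
    by (simp add: algebra_simps)
  have "D\<^sup>2 \<le> (s / \<beta> + \<sigma> * a)\<^sup>2" by (rule power_mono[OF D pos(6)])
  also have "\<dots> \<le> 2 * (s / \<beta>)\<^sup>2 + 2 * (\<sigma> * a)\<^sup>2" by (rule sq_add_le)
  finally have D_sq: "D\<^sup>2 \<le> 2 * (s / \<beta>)\<^sup>2 + 2 * (\<sigma> * a)\<^sup>2" .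
  have "8 * p * \<beta> * U\<^sup>2 \<le> 8 * p * \<beta> * (1 / 128 * D\<^sup>2 + C * e\<^sup>2)"
    using pos U by (intro mult_left_mono) auto
  also have "\<dots> = p * \<beta> * D\<^sup>2 / 16 + e\<^sup>2 * (8 * p * \<beta> * C)" by (simp add: algebra_simps)
  also have "p * \<beta> * D\<^sup>2 / 16 \<le> p * \<beta> * (2 * (s / \<beta>)\<^sup>2 + 2 * (\<sigma> * a)\<^sup>2) / 16"
    using D_sq pos by (intro divide_right_mono mult_left_mono) auto
  also have "p * \<beta> * (2 * (s / \<beta>)\<^sup>2 + 2 * (\<sigma> * a)\<^sup>2) / 16 = p * s\<^sup>2 / \<beta> / 8 + a\<^sup>2 * (p * \<beta> * \<sigma>\<^sup>2 / 8)"
    using pos by (simp add: power2_eq_square field_simps)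
  also have "a\<^sup>2 * (p * \<beta> * \<sigma>\<^sup>2 / 8) \<le> a\<^sup>2 * (1 / (16 * c))"
    using \<beta>(1) pos by (intro mult_left_mono) (auto simp: field_simps)
  also have "e\<^sup>2 * (8 * p * \<beta> * C) \<le> e\<^sup>2 * (1 / (16 * \<alpha>))"
    using \<beta>(2) pos by (intro mult_left_mono) (auto simp: field_simps)
  finally show ?thesis using young by simp
qed

lemma z_coupling_bound:
  fixes a e s U D Q c \<alpha> \<beta> p \<mu> C \<sigma> M :: real
  assumes pos: "0 < c" "0 < \<alpha>" "0 < \<beta>" "0 < p" "0 < \<mu>" "0 \<le> C" "0 \<le> s" "0 \<le> D"
    and \<beta>: "\<beta> \<le> 1 / 36" "\<beta> \<le> \<mu> / (8 * p)" "\<beta> * (128 * c * p * M\<^sup>2) \<le> 1"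
      "\<beta> * (2 * c * p * \<sigma>\<^sup>2) \<le> 1" "\<beta> * (128 * p * \<alpha> * C) \<le> 1"
    and Q: "Q \<le> p / \<mu> * s + M * a + U" and U: "U\<^sup>2 \<le> 1 / 128 * D\<^sup>2 + C * e\<^sup>2"
    and D: "D \<le> s / \<beta> + \<sigma> * a"
  shows "p * s\<^sup>2 / 2 + 2 * p * Q * s \<le> 23 / 36 * (p * s\<^sup>2 / \<beta>) + a\<^sup>2 / c / 8 + e\<^sup>2 / \<alpha> / 16"
proof -
  have "p * s\<^sup>2 * (1 / 2) \<le> p * s\<^sup>2 * (1 / \<beta> / 72)"
    using pos \<beta>(1) by (intro mult_left_mono) (auto simp: field_simps)
  then have zz_quad: "p * s\<^sup>2 / 2 \<le> p * s\<^sup>2 / \<beta> / 72" by simp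
  have "2 * p * s * Q \<le> 2 * p * s * (p / \<mu> * s + M * a + U)"
    using Q pos by (intro mult_left_mono) auto
  then have Q_split: "2 * p * Q * s \<le> 2 * p * (p / \<mu> * s) * s + 2 * p * (M * a) * s + 2 * p * U * s"
    by (simp add: algebra_simps)
  have "p * s\<^sup>2 * (2 * p / \<mu>) \<le> p * s\<^sup>2 * (1 / \<beta> / 4)"
    using pos \<beta>(2) by (intro mult_left_mono) (auto simp: field_simps)
  then have zz_term: "2 * p * (p / \<mu> * s) * s \<le> p * s\<^sup>2 / \<beta> / 4"
    by (simp add: power2_eq_square mult_ac)
  have "2 * (M * a) * s \<le> 8 * \<beta> * (M * a)\<^sup>2 + s\<^sup>2 / (8 * \<beta>)" by (rule young_ineq) (use pos in simp)
  then have "p * (2 * (M * a) * s) \<le> p * (8 * \<beta> * (M * a)\<^sup>2 + s\<^sup>2 / (8 * \<beta>))"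
    using pos by (intro mult_left_mono) auto
  also have "\<dots> = a\<^sup>2 * (8 * p * \<beta> * M\<^sup>2) + p * s\<^sup>2 / \<beta> / 8" by (simp add: power2_eq_square algebra_simps)
  also have "a\<^sup>2 * (8 * p * \<beta> * M\<^sup>2) \<le> a\<^sup>2 * (1 / (16 * c))"
    using pos \<beta>(3) by (intro mult_left_mono) (auto simp: field_simps)
  finally have xz_term: "2 * p * (M * a) * s \<le> p * s\<^sup>2 / \<beta> / 8 + a\<^sup>2 / c / 16" by (simp add: algebra_simps)
  have prox_term: "2 * p * U * s \<le> p * s\<^sup>2 / \<beta> / 4 + a\<^sup>2 / c / 16 + e\<^sup>2 / \<alpha> / 16"
    by (rule prox_error_term_bound[OF pos(1-4,6,8) \<beta>(4,5) U D])
  have combine: "S2 \<le> P / 72 \<Longrightarrow> X \<le> X1 + X2 + X3 \<Longrightarrow> X1 \<le> P / 4 \<Longrightarrow> X2 \<le> P / 8 + A / 16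
      \<Longrightarrow> X3 \<le> P / 4 + A / 16 + E / 16 \<Longrightarrow> S2 + X \<le> 23 / 36 * P + A / 8 + E / 16"
    for S2 P X X1 X2 X3 A E :: real
    by linarith
  show ?thesis by (rule combine[OF zz_quad Q_split zz_term xz_term prox_term])
qed

section \<open>Strict complementarity\<close>

lemma KKT_shift:
  assumes kkt: "KKT F gF x y \<mu> \<nu>" and nonneg: "\<And>i. 0 \<le> (y + s *\<^sub>R v) $ i"
    and vsum: "(\<Sum>i\<in>UNIV. v $ i) = 0" and vsupp: "\<And>i. \<nu> $ i \<noteq> 0 \<Longrightarrow> v $ i = 0"
    and vker: "(\<Sum>i\<in>UNIV. v $ i *\<^sub>R gF i x) = 0"
  shows "KKT F gF x (y + s *\<^sub>R v) \<mu> \<nu>"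
proof -
  have "(\<Sum>i\<in>UNIV. (y + s *\<^sub>R v) $ i *\<^sub>R gF i x)
      = (\<Sum>i\<in>UNIV. y $ i *\<^sub>R gF i x) + s *\<^sub>R (\<Sum>i\<in>UNIV. v $ i *\<^sub>R gF i x)"
    by (simp add: scaleR_add_left sum.distrib scaleR_sum_right)
  moreover have "\<nu> $ i * (y + s *\<^sub>R v) $ i = 0" for i
    using kkt vsupp[of i] by (cases "\<nu> $ i = 0") (auto simp: KKT_def)
  ultimately show ?thesis
    using kkt nonneg vsum vker by (simp add: KKT_def sum.distrib sum_distrib_left[symmetric])
qed

text \<open>If \<open>v \<noteq> 0\<close>, moving from \<open>y\<close> along \<open>v\<close> until a coordinate vanishes gives a KKT point
  with a zero coordinate \<open>i\<^sub>0\<close> where \<open>v\<close> was negative, hence \<open>\<nu>\<^sub>i\<^sub>0 = 0\<close>.\<close>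
lemma strict_complementarity_null_direction:
  assumes sc: "strict_complementarity F gF" and kkt: "KKT F gF x y \<mu> \<nu>"
    and vsum: "(\<Sum>i\<in>UNIV. v $ i) = 0" and vsupp: "\<And>i. \<nu> $ i \<noteq> 0 \<Longrightarrow> v $ i = 0"
    and vker: "(\<Sum>i\<in>UNIV. v $ i *\<^sub>R gF i x) = 0"
  shows "v = 0"
proof (rule ccontr)
  assume "v \<noteq> 0"
  define N where "N = {i. v $ i < 0}"
  have "N \<noteq> {}"
  proof
    assume "N = {}"
    then have "\<forall>i\<in>UNIV. v $ i = 0"
      using vsum by (simp add: N_def not_less sum_nonneg_eq_0_iff)
    then show False using \<open>v \<noteq> 0\<close> by (simp add: vec_eq_iff)
  qed
  define s where "s = Min ((\<lambda>i. y $ i / (- v $ i)) ` N)"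
  have "s \<in> (\<lambda>i. y $ i / (- v $ i)) ` N"
    unfolding s_def using \<open>N \<noteq> {}\<close> by (intro Min_in) auto
  then obtain i0 where i0: "i0 \<in> N" "s = y $ i0 / (- v $ i0)" by blast
  have y0: "0 \<le> y $ i" for i using kkt by (simp add: KKT_def)
  have "0 \<le> (y + s *\<^sub>R v) $ i" for i
  proof (cases "i \<in> N")
    case True
    then have "s \<le> y $ i / (- v $ i)" unfolding s_def by (intro Min_le) auto
    then show ?thesis using True by (simp add: N_def field_simps)
  next
    case False
    moreover have "0 \<le> s" using i0 y0[of i0] by (simp add: N_def divide_nonneg_neg)
    ultimately show ?thesis using y0[of i] by (simp add: N_def)
  qed
  then have "KKT F gF x (y + s *\<^sub>R v) \<mu> \<nu>" by (rule KKT_shift[OF kkt _ vsum vsupp vker])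
  moreover have "(y + s *\<^sub>R v) $ i0 = 0" using i0 by (simp add: N_def)
  ultimately have "\<nu> $ i0 > 0" using sc by (auto simp: strict_complementarity_def)
  then show False using vsupp[of i0] i0 by (simp add: N_def)
qed

section \<open>The proximal subproblem\<close>

locale sgda =
  fixes F :: "real^'n \<Rightarrow> real^'m"
    and gF :: "'m \<Rightarrow> real^'n \<Rightarrow> real^'n"
    and L p :: real
  assumes deriv: "\<And>i x. ((\<lambda>u. F u $ i) has_derivative (\<lambda>h. gF i x \<bullet> h)) (at x)"
    and L_pos: "L > 0"
    and gradx_f_lipschitz: "\<And>x x' y y'. y \<in> prob_simplex \<Longrightarrow> y' \<in> prob_simplex \<Longrightarrow>
        norm (gradx_f gF x y - gradx_f gF x' y') \<le> L * norm ((x, y) - (x', y'))"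
    and F_lipschitz: "\<And>x x'. norm (F x - F x') \<le> L * norm (x - x')"
    and p_gt: "p > 3 * L"
begin

abbreviation "K \<equiv> Kfun F p"
abbreviation "gK \<equiv> gradx_K gF p"
abbreviation "xm \<equiv> xopt F p"

text \<open>The modulus of strong convexity of \<open>K(\<cdot>, z; y)\<close>.\<close>
definition "mu = p - L"

lemma mu_pos: "mu > 0" and two_L_le_mu: "2 * L \<le> mu" and p_pos: "p > 0"
  using p_gt L_pos by (auto simp: mu_def)

lemma gradx_f_lipschitz_x: "y \<in> prob_simplex \<Longrightarrow> norm (gradx_f gF x y - gradx_f gF x' y) \<le> L * norm (x - x')"
  using gradx_f_lipschitz[of y y x x'] by (simp add: norm_Pair)

lemma gradx_f_lipschitz_y:
  "y \<in> prob_simplex \<Longrightarrow> y' \<in> prob_simplex \<Longrightarrow> norm (gradx_f gF x y - gradx_f gF x y') \<le> L * norm (y - y')"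
  using gradx_f_lipschitz[of y y' x x] by (simp add: norm_Pair)

lemma gradx_f_axis: "gradx_f gF x (axis i 1) = gF i x"
proof -
  have "gradx_f gF x (axis i 1) = (\<Sum>j\<in>UNIV. (if j = i then gF i x else 0))"
    unfolding gradx_f_def by (intro sum.cong) (auto simp: axis_def)
  then show ?thesis by simp
qed

lemma isCont_F: "isCont F x"
proof -
  have "continuous_on UNIV F"
    by (rule lipschitz_on_continuous_on[OF lipschitz_onI[of UNIV F L]])
      (auto simp: dist_norm F_lipschitz less_imp_le[OF L_pos])
  then show ?thesis by (simp add: continuous_on_eq_continuous_at)
qed

lemma isCont_gF: "isCont (gF i) x"
proof -
  have "norm (gF i u - gF i v) \<le> L * norm (u - v)" for u v
    using gradx_f_lipschitz_x[OF axis_in_prob_simplex[of i], of u v] by (simp add: gradx_f_axis)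
  then have "continuous_on UNIV (gF i)"
    by (intro lipschitz_on_continuous_on[OF lipschitz_onI[of UNIV "gF i" L]])
      (auto simp: dist_norm less_imp_le[OF L_pos])
  then show ?thesis by (simp add: continuous_on_eq_continuous_at)
qed

lemma has_derivative_fval: "((\<lambda>x. fval F x y) has_derivative (\<lambda>h. gradx_f gF x y \<bullet> h)) (at x)"
proof -
  have "((\<lambda>x. \<Sum>i\<in>UNIV. F x $ i * y $ i) has_derivative (\<lambda>h. \<Sum>i\<in>UNIV. (gF i x \<bullet> h) * y $ i)) (at x)"
    by (intro has_derivative_sum has_derivative_mult_left deriv)
  moreover have "(\<lambda>h. \<Sum>i\<in>UNIV. (gF i x \<bullet> h) * y $ i) = (\<lambda>h. gradx_f gF x y \<bullet> h)"
    by (simp add: gradx_f_def inner_sum_left mult.commute)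
  ultimately show ?thesis by (simp add: fval_def inner_vec_def)
qed

lemma has_derivative_K: "((\<lambda>x. K x z y) has_derivative (\<lambda>h. gK x z y \<bullet> h)) (at x)"
proof -
  have "((\<lambda>x. fval F x y + p / 2 * ((x - z) \<bullet> (x - z))) has_derivative
        (\<lambda>h. gradx_f gF x y \<bullet> h + p / 2 * ((x - z) \<bullet> h + h \<bullet> (x - z)))) (at x)"
    by (rule has_derivative_add[OF has_derivative_fval]) (auto intro!: derivative_eq_intros)
  moreover have "(\<lambda>h. gradx_f gF x y \<bullet> h + p / 2 * ((x - z) \<bullet> h + h \<bullet> (x - z))) = (\<lambda>h. gK x z y \<bullet> h)"
    by (auto simp: gradx_K_def inner_add_left inner_commute algebra_simps)
  ultimately show ?thesis by (simp add: Kfun_def power2_norm_eq_inner)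
qed

lemma gK_diff: "gK a z y - gK b z y = (gradx_f gF a y - gradx_f gF b y) + p *\<^sub>R (a - b)"
  by (simp add: gradx_K_def algebra_simps)

lemma
  assumes "y \<in> prob_simplex"
  shows gK_strongly_monotone: "(gK a z y - gK b z y) \<bullet> (a - b) \<ge> mu * (norm (a - b))\<^sup>2"
    and gK_comonotone: "(gK a z y - gK b z y) \<bullet> (a - b) \<le> (p + L) * (norm (a - b))\<^sup>2"
proof -
  have "\<bar>(gradx_f gF a y - gradx_f gF b y) \<bullet> (a - b)\<bar> \<le> L * norm (a - b) * norm (a - b)"
    using Cauchy_Schwarz_ineq2[of "gradx_f gF a y - gradx_f gF b y" "a - b"]
      mult_right_mono[OF gradx_f_lipschitz_x[OF assms, of a b] norm_ge_zero[of "a - b"]]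
    by linarith
  moreover have "(gK a z y - gK b z y) \<bullet> (a - b) = (gradx_f gF a y - gradx_f gF b y) \<bullet> (a - b) + p * (norm (a - b))\<^sup>2"
    by (simp add: gK_diff inner_add_left power2_norm_eq_inner)
  ultimately show "(gK a z y - gK b z y) \<bullet> (a - b) \<ge> mu * (norm (a - b))\<^sup>2"
    "(gK a z y - gK b z y) \<bullet> (a - b) \<le> (p + L) * (norm (a - b))\<^sup>2"
    by (auto simp: mu_def algebra_simps abs_le_iff power2_eq_square)
qed

lemma K_upper_quadratic:
  "y \<in> prob_simplex \<Longrightarrow> K (a + d) z y \<le> K a z y + gK a z y \<bullet> d + (p + L) / 2 * (norm d)\<^sup>2"
  by (rule gradient_upper_quadratic_bound[OF has_derivative_K gK_comonotone])

lemma K_lower_quadratic: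
  "y \<in> prob_simplex \<Longrightarrow> K (a + d) z y \<ge> K a z y + gK a z y \<bullet> d + mu / 2 * (norm d)\<^sup>2"
  by (rule gradient_lower_quadratic_bound[OF has_derivative_K gK_strongly_monotone])

lemma K_diff_y: "K x z y' - K x z y = F x \<bullet> (y' - y)"
  by (simp add: Kfun_def fval_def inner_diff_right)

lemma continuous_on_K: "continuous_on S (\<lambda>x. K x z y)"
  by (intro continuous_at_imp_continuous_on ballI has_derivative_continuous[OF has_derivative_K])

lemma K_has_minimizer:
  assumes y: "y \<in> prob_simplex"
  shows "\<exists>x. \<forall>x'. K x z y \<le> K x' z y"
proof -
  define S where "S = {w. K w z y \<le> K z z y}"
  have "norm (w - z) \<le> 2 * norm (gK z z y) / mu" if "w \<in> S" for w
  proof -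
    have "K z z y + gK z z y \<bullet> (w - z) + mu / 2 * (norm (w - z))\<^sup>2 \<le> K w z y"
      using K_lower_quadratic[OF y, where a=z and d="w - z" and z=z] by simp
    then have growth: "mu / 2 * (norm (w - z))\<^sup>2 \<le> norm (gK z z y) * norm (w - z)"
      using that norm_cauchy_schwarz[of "- gK z z y" "w - z"] by (simp add: S_def)
    have "norm (w - z) \<le> norm (gK z z y) / (mu / 2)"
      by (rule le_divide_if_mult_sq_le[OF _ growth]) (use mu_pos in auto)
    then show ?thesis by (simp add: mult.commute)
  qed
  then have "norm w \<le> norm z + 2 * norm (gK z z y) / mu" if "w \<in> S" for w
    using that norm_triangle_ineq2[of w z] by fastforce
  then have "bounded S"
    unfolding bounded_iff by blast
  moreover have "closed S"
    unfolding S_def by (intro closed_Collect_le continuous_on_K continuous_intros)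
  ultimately have "compact S" by (simp add: compact_eq_bounded_closed)
  moreover have "z \<in> S" by (simp add: S_def)
  ultimately obtain x where x: "x \<in> S" "\<forall>w\<in>S. K x z y \<le> K w z y"
    using continuous_attains_inf[of S "\<lambda>x. K x z y"] continuous_on_K by blast
  then have "K x z y \<le> K x' z y" for x'
    by (cases "x' \<in> S") (auto simp: S_def)
  then show ?thesis by blast
qed

lemma xm_minimal: "y \<in> prob_simplex \<Longrightarrow> K (xm y z) z y \<le> K w z y"
  unfolding xopt_def using someI_ex[OF K_has_minimizer] by blast

lemma dfun_eq_K_xm: "y \<in> prob_simplex \<Longrightarrow> dfun F p y z = K (xm y z) z y"
  unfolding dfun_def by (rule cInf_eq_minimum) (auto simp: xm_minimal)

text \<open>A gradient step of length \<open>1/(p+L)\<close> would decrease \<open>K\<close> by \<open>|g|\<^sup>2/(2(p+L))\<close>.\<close>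
lemma gK_xm_eq_0:
  assumes y: "y \<in> prob_simplex"
  shows "gK (xm y z) z y = 0"
proof -
  let ?x = "xm y z" and ?g = "gK (xm y z) z y" and ?t = "1 / (p + L)"
  have "K ?x z y \<le> K (?x + (- ?t *\<^sub>R ?g)) z y" by (rule xm_minimal[OF y])
  also have "\<dots> \<le> K ?x z y + ?g \<bullet> (- ?t *\<^sub>R ?g) + (p + L) / 2 * (norm (- ?t *\<^sub>R ?g))\<^sup>2"
    by (rule K_upper_quadratic[OF y])
  finally have descent: "0 \<le> ?g \<bullet> (- ?t *\<^sub>R ?g) + (p + L) / 2 * (norm (- ?t *\<^sub>R ?g))\<^sup>2"
    by simp
  have inner: "?g \<bullet> (- ?t *\<^sub>R ?g) = - (?t * (norm ?g)\<^sup>2)" by (simp add: power2_norm_eq_inner)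
  have quad: "(p + L) / 2 * (norm (- ?t *\<^sub>R ?g))\<^sup>2 = ?t * (norm ?g)\<^sup>2 / 2"
    using p_pos L_pos by (simp add: power_mult_distrib power2_eq_square)
  have half: "0 \<le> - u + u / 2 \<Longrightarrow> u \<le> 0" for u :: real by linarith
  have "?t * (norm ?g)\<^sup>2 \<le> 0"
    by (rule half) (use descent in \<open>simp only: inner quad\<close>)
  then have "(norm ?g)\<^sup>2 \<le> 0" using p_pos L_pos by (simp add: divide_le_0_iff)
  then show ?thesis by simp
qed

lemma K_quadratic_growth:
  assumes y: "y \<in> prob_simplex"
  shows "K w z y \<ge> K (xm y z) z y + mu / 2 * (norm (w - xm y z))\<^sup>2"
  using K_lower_quadratic[OF y, where a="xm y z" and d="w - xm y z" and z=z] gK_xm_eq_0[OF y, of z]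
  by simp

lemma xm_lipschitz:
  assumes y: "y \<in> prob_simplex" and y': "y' \<in> prob_simplex"
  shows "norm (xm y z - xm y' z') \<le> L / mu * norm (y - y') + p / mu * norm (z - z')"
proof -
  let ?x1 = "xm y z" and ?x2 = "xm y' z'"
  have "gK ?x1 z' y' - gK ?x2 z' y' = gK ?x1 z' y' - gK ?x1 z y"
    using gK_xm_eq_0[OF y, of z] gK_xm_eq_0[OF y', of z'] by simp
  also have "\<dots> = (gradx_f gF ?x1 y' - gradx_f gF ?x1 y) + p *\<^sub>R (z - z')"
    by (simp add: gradx_K_def algebra_simps)
  finally have eq: "gK ?x1 z' y' - gK ?x2 z' y' = (gradx_f gF ?x1 y' - gradx_f gF ?x1 y) + p *\<^sub>R (z - z')" .
  have "norm ((gradx_f gF ?x1 y' - gradx_f gF ?x1 y) + p *\<^sub>R (z - z'))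
      \<le> L * norm (y - y') + p * norm (z - z')"
    using norm_triangle_ineq[of "gradx_f gF ?x1 y' - gradx_f gF ?x1 y" "p *\<^sub>R (z - z')"]
      gradx_f_lipschitz_y[OF y' y, of ?x1] p_pos by (simp add: norm_minus_commute)
  then have bound: "norm (gK ?x1 z' y' - gK ?x2 z' y') \<le> L * norm (y - y') + p * norm (z - z')"
    by (simp only: eq)
  have "mu * (norm (?x1 - ?x2))\<^sup>2 \<le> (gK ?x1 z' y' - gK ?x2 z' y') \<bullet> (?x1 - ?x2)"
    by (rule gK_strongly_monotone[OF y'])
  also have "\<dots> \<le> norm (gK ?x1 z' y' - gK ?x2 z' y') * norm (?x1 - ?x2)"
    by (rule norm_cauchy_schwarz)
  also have "\<dots> \<le> (L * norm (y - y') + p * norm (z - z')) * norm (?x1 - ?x2)"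
    by (rule mult_right_mono[OF bound norm_ge_zero])
  finally have "norm (?x1 - ?x2) \<le> (L * norm (y - y') + p * norm (z - z')) / mu"
    using le_divide_if_mult_sq_le[OF mu_pos] L_pos p_pos by simp
  then show ?thesis by (simp add: add_divide_distrib)
qed

lemma xm_lipschitz_y:
  "y \<in> prob_simplex \<Longrightarrow> y' \<in> prob_simplex \<Longrightarrow> norm (xm y z - xm y' z) \<le> L / mu * norm (y - y')"
  using xm_lipschitz[of y y' z z] by simp

lemma xm_lipschitz_z: "y \<in> prob_simplex \<Longrightarrow> norm (xm y z - xm y z') \<le> p / mu * norm (z - z')"
  using xm_lipschitz[of y y z z'] by simp

lemma tendsto_xm:
  assumes "\<And>k. Y k \<in> prob_simplex" "y \<in> prob_simplex" "Y \<longlonglongrightarrow> y" "Z \<longlonglongrightarrow> z"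
  shows "(\<lambda>k. xm (Y k) (Z k)) \<longlonglongrightarrow> xm y z"
proof (rule LIM_zero_cancel, rule Lim_null_comparison)
  show "\<forall>\<^sub>F k in sequentially. norm (xm (Y k) (Z k) - xm y z) \<le> L / mu * norm (Y k - y) + p / mu * norm (Z k - z)"
    using xm_lipschitz assms by simp
  have "(\<lambda>k. L / mu * norm (Y k - y) + p / mu * norm (Z k - z)) \<longlonglongrightarrow> L / mu * 0 + p / mu * 0"
    by (intro tendsto_intros tendsto_norm_zero LIM_zero assms)
  then show "(\<lambda>k. L / mu * norm (Y k - y) + p / mu * norm (Z k - z)) \<longlonglongrightarrow> 0" by simp
qed

lemma dist_xm_le:
  assumes y: "y \<in> prob_simplex"
  shows "norm (x - xm y z) \<le> norm (gK x z y) / mu"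
proof -
  have "mu * (norm (x - xm y z))\<^sup>2 \<le> (gK x z y - gK (xm y z) z y) \<bullet> (x - xm y z)"
    by (rule gK_strongly_monotone[OF y])
  also have "\<dots> \<le> norm (gK x z y) * norm (x - xm y z)"
    using gK_xm_eq_0[OF y] norm_cauchy_schwarz by simp
  finally show ?thesis using le_divide_if_mult_sq_le[OF mu_pos] by simp
qed

text \<open>Optimality of both minimisers turns the change of \<open>y\<close> in \<open>\<nabla>\<^sub>xf(x(y, z), y)\<close> into
  a change of \<open>x\<close> in \<open>\<nabla>\<^sub>xK(\<cdot>, z; y')\<close>.\<close>
lemma gF_combination_xm_le:
  assumes y: "y \<in> prob_simplex" and y': "y' \<in> prob_simplex"
  shows "norm (\<Sum>i\<in>UNIV. (y - y') $ i *\<^sub>R gF i (xm y z)) \<le> (p + L) * norm (xm y z - xm y' z)"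
proof -
  let ?x1 = "xm y z" and ?x2 = "xm y' z"
  have "(\<Sum>i\<in>UNIV. (y - y') $ i *\<^sub>R gF i ?x1) = gK ?x1 z y - gK ?x1 z y'"
    by (simp add: gradx_K_def gradx_f_def sum_subtractf[symmetric] scaleR_diff_left)
  also have "\<dots> = gK ?x2 z y' - gK ?x1 z y'"
    using gK_xm_eq_0[OF y, of z] gK_xm_eq_0[OF y', of z] by simp
  also have "norm \<dots> \<le> norm (gradx_f gF ?x2 y' - gradx_f gF ?x1 y') + norm (p *\<^sub>R (?x2 - ?x1))"
    unfolding gK_diff by (rule norm_triangle_ineq)
  also have "\<dots> \<le> L * norm (?x2 - ?x1) + p * norm (?x2 - ?x1)"
    using gradx_f_lipschitz_x[OF y', of ?x2 ?x1] p_pos by (intro add_mono) auto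
  also have "\<dots> = (p + L) * norm (?x1 - ?x2)"
    by (simp add: norm_minus_commute algebra_simps)
  finally show ?thesis .
qed

lemma xm_cross_monotone:
  assumes y: "y \<in> prob_simplex" and y': "y' \<in> prob_simplex"
  shows "mu * (norm (xm y z - xm y' z))\<^sup>2 \<le> (F (xm y z) - F (xm y' z)) \<bullet> (y' - y)"
proof -
  let ?x1 = "xm y z" and ?x2 = "xm y' z"
  have "K ?x1 z y' \<ge> K ?x2 z y' + mu / 2 * (norm (?x1 - ?x2))\<^sup>2"
    by (rule K_quadratic_growth[OF y'])
  moreover have "K ?x2 z y \<ge> K ?x1 z y + mu / 2 * (norm (?x1 - ?x2))\<^sup>2"
    using K_quadratic_growth[OF y, where w = ?x2 and z = z] by (simp add: norm_minus_commute)
  moreover have "(F ?x1 - F ?x2) \<bullet> (y' - y) = (K ?x1 z y' - K ?x1 z y) - (K ?x2 z y' - K ?x2 z y)"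
    by (simp add: K_diff_y inner_diff_left)
  ultimately show ?thesis by linarith
qed

section \<open>Dual solutions and the envelope P\<close>

text \<open>\<open>F(x(y, z))\<close> is the gradient of the concave function \<open>d(\<cdot>, z)\<close>, so this is the
  optimality condition for maximising \<open>d(\<cdot>, z)\<close> over the simplex.\<close>
definition "dual_solution z y \<longleftrightarrow> y \<in> prob_simplex \<and> (\<forall>w\<in>prob_simplex. F (xm y z) \<bullet> (w - y) \<le> 0)"

text \<open>Brouwer's theorem applied to the continuous map \<open>y \<mapsto> P\<^sub>\<Delta>(y + F(x(y, z)))\<close>.\<close>
lemma dual_solution_exists: "\<exists>y. dual_solution z y"
proof -
  define T where "T y = proj_simplex (y + F (xm y z))" for y
  have "continuous_on prob_simplex T"
  proof (rule lipschitz_on_continuous_on[OF lipschitz_onI])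
    fix a b :: "real^'m" assume a: "a \<in> prob_simplex" and b: "b \<in> prob_simplex"
    have "dist (T a) (T b) \<le> norm ((a + F (xm a z)) - (b + F (xm b z)))"
      unfolding T_def dist_norm by (rule proj_simplex_nonexpansive)
    also have "\<dots> \<le> norm (a - b) + norm (F (xm a z) - F (xm b z))"
      by (metis add_diff_add norm_triangle_ineq)
    also have "\<dots> \<le> norm (a - b) + L * (L / mu * norm (a - b))"
      using F_lipschitz[of "xm a z" "xm b z"] xm_lipschitz_y[OF a b, of z] L_pos
      by (smt (verit, best) mult_left_mono)
    also have "\<dots> = (1 + L * L / mu) * dist a b" by (simp add: dist_norm algebra_simps)
    finally show "dist (T a) (T b) \<le> (1 + L * L / mu) * dist a b" .
  qed (use mu_pos in simp)
  moreover have "T \<in> prob_simplex \<rightarrow> prob_simplex" by (auto simp: T_def proj_simplex_in)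
  ultimately obtain y where y: "y \<in> prob_simplex" "T y = y"
    using brouwer[OF compact_prob_simplex convex_prob_simplex prob_simplex_nonempty] by blast
  have "F (xm y z) \<bullet> (w - y) \<le> 0" if "w \<in> prob_simplex" for w
    using proj_simplex_obtuse[OF that, of "y + F (xm y z)"] y by (simp add: T_def)
  then show ?thesis using y by (auto simp: dual_solution_def)
qed

definition "ystar z = (SOME y. dual_solution z y)"
definition "xstar z = xm (ystar z) z"

lemma dual_solution_ystar: "dual_solution z (ystar z)"
  unfolding ystar_def using someI_ex[OF dual_solution_exists] .

lemma ystar_in_prob_simplex: "ystar z \<in> prob_simplex"
  using dual_solution_ystar by (simp add: dual_solution_def)

definition "Kmax z x = psi F x + p / 2 * (norm (x - z))\<^sup>2"

lemma K_le_Kmax: "y \<in> prob_simplex \<Longrightarrow> K x z y \<le> Kmax z x"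
  using inner_prob_simplex_le_Max[of y "F x"] by (simp add: Kfun_def fval_def Kmax_def psi_def)

lemma SUP_K_eq_Kmax: "(SUP y\<in>prob_simplex. K x z y) = Kmax z x"
proof (rule cSup_eq_maximum)
  obtain i where "Max (range (\<lambda>i. F x $ i)) = F x $ i" using ex_component_eq_Max by blast
  then have "K x z (axis i 1) = Kmax z x"
    by (simp add: Kfun_def fval_def Kmax_def psi_def inner_axis)
  then show "Kmax z x \<in> (\<lambda>y. K x z y) ` prob_simplex"
    using axis_in_prob_simplex by (metis image_eqI)
qed (use K_le_Kmax in auto)

lemma dual_solution_K_eq_Kmax:
  assumes "dual_solution z y"
  shows "K (xm y z) z y = Kmax z (xm y z)"
proof -
  let ?g = "F (xm y z)"
  have y: "y \<in> prob_simplex" using assms by (simp add: dual_solution_def)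
  obtain i where i: "Max (range (\<lambda>i. ?g $ i)) = ?g $ i" using ex_component_eq_Max by blast
  have "?g \<bullet> (axis i 1 - y) \<le> 0"
    using assms axis_in_prob_simplex[of i] unfolding dual_solution_def by blast
  then have "?g $ i \<le> ?g \<bullet> y" by (simp add: inner_diff_right inner_axis)
  then have "?g \<bullet> y = psi F (xm y z)"
    using inner_prob_simplex_le_Max[OF y, of ?g] i by (simp add: psi_def)
  then show ?thesis by (simp add: Kfun_def fval_def Kmax_def)
qed

lemma dual_solution_minimizes_Kmax:
  assumes "dual_solution z y"
  shows "Kmax z (xm y z) \<le> Kmax z w"
proof -
  have y: "y \<in> prob_simplex" using assms by (simp add: dual_solution_def)
  have "Kmax z (xm y z) = K (xm y z) z y" using dual_solution_K_eq_Kmax[OF assms] by simp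
  also have "\<dots> \<le> K w z y" by (rule xm_minimal[OF y])
  also have "\<dots> \<le> Kmax z w" by (rule K_le_Kmax[OF y])
  finally show ?thesis .
qed

lemma Pfun_eq_Kmax_xstar: "Pfun F p z = Kmax z (xstar z)"
  unfolding Pfun_def SUP_K_eq_Kmax xstar_def
  by (rule cInf_eq_minimum) (auto simp: dual_solution_minimizes_Kmax[OF dual_solution_ystar])

lemma Pfun_le_Kmax: "Pfun F p z \<le> Kmax z w"
  unfolding Pfun_eq_Kmax_xstar xstar_def by (rule dual_solution_minimizes_Kmax[OF dual_solution_ystar])

lemma dfun_le_Pfun:
  assumes y: "y \<in> prob_simplex"
  shows "dfun F p y z \<le> Pfun F p z"
proof -
  have "dfun F p y z = K (xm y z) z y" by (rule dfun_eq_K_xm[OF y])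
  also have "\<dots> \<le> K (xstar z) z y" by (rule xm_minimal[OF y])
  also have "\<dots> \<le> Kmax z (xstar z)" by (rule K_le_Kmax[OF y])
  finally show ?thesis by (simp add: Pfun_eq_Kmax_xstar)
qed

lemma Pfun_le_phi: "y \<in> prob_simplex \<Longrightarrow> Pfun F p z \<le> phi F p x y z"
  using dfun_le_Pfun[of y z] dfun_eq_K_xm[of y z] xm_minimal[of y z x] by (simp add: phi_def)

section \<open>The dual error bound\<close>

definition "yplus a y z = proj_simplex (y + a *\<^sub>R F (xm y z))"

lemma yplus_in_prob_simplex: "yplus a y z \<in> prob_simplex"
  by (simp add: yplus_def proj_simplex_in)

lemma tendsto_yplus:
  assumes "\<And>k. Y k \<in> prob_simplex" "y \<in> prob_simplex" "Y \<longlonglongrightarrow> y" "Z \<longlonglongrightarrow> z"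
  shows "(\<lambda>k. yplus a (Y k) (Z k)) \<longlonglongrightarrow> yplus a y z"
  unfolding yplus_def
  by (intro isCont_tendsto_compose[OF isCont_proj_simplex] tendsto_intros assms
      isCont_tendsto_compose[OF isCont_F] tendsto_xm)

definition "dual_gap a y z = yplus a y z - ystar z"
definition "primal_gap a y z = xm (yplus a y z) z - xstar z"

lemma sum_dual_gap: "(\<Sum>i\<in>UNIV. dual_gap a y z $ i) = 0"
  using yplus_in_prob_simplex[of a y z] ystar_in_prob_simplex[of z]
  by (simp add: dual_gap_def sum_subtractf prob_simplex_iff)

lemma norm_primal_gap_le: "norm (primal_gap a y z) \<le> L / mu * norm (dual_gap a y z)"
  using xm_lipschitz_y[OF yplus_in_prob_simplex ystar_in_prob_simplex]
  by (simp add: primal_gap_def dual_gap_def xstar_def)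

lemma norm_primal_gap_le_ratio:
  "norm (primal_gap a y z) \<le> 2 * (norm (primal_gap a y z) / norm (dual_gap a y z))"
proof (cases "dual_gap a y z = 0")
  case True
  then show ?thesis using norm_primal_gap_le[of a y z] by simp
next
  case False
  have "norm (dual_gap a y z) \<le> 2"
    unfolding dual_gap_def by (rule norm_diff_prob_simplex_le[OF yplus_in_prob_simplex ystar_in_prob_simplex])
  then show ?thesis
    using False mult_left_mono[of "norm (dual_gap a y z)" 2 "norm (primal_gap a y z) / norm (dual_gap a y z)"]
    by (simp add: mult.commute)
qed

lemma gF_combination_sgn_dual_gap_le:
  "norm (\<Sum>i\<in>UNIV. sgn (dual_gap a y z) $ i *\<^sub>R gF i (xm (yplus a y z) z))
    \<le> (p + L) * (norm (primal_gap a y z) / norm (dual_gap a y z))"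
proof -
  have "(\<Sum>i\<in>UNIV. sgn (dual_gap a y z) $ i *\<^sub>R gF i (xm (yplus a y z) z))
      = (1 / norm (dual_gap a y z)) *\<^sub>R (\<Sum>i\<in>UNIV. dual_gap a y z $ i *\<^sub>R gF i (xm (yplus a y z) z))"
    by (simp add: sgn_div_norm scaleR_sum_right divide_inverse mult.commute)
  moreover have "norm (\<Sum>i\<in>UNIV. dual_gap a y z $ i *\<^sub>R gF i (xm (yplus a y z) z))
      \<le> (p + L) * norm (primal_gap a y z)"
    using gF_combination_xm_le[OF yplus_in_prob_simplex ystar_in_prob_simplex]
    by (simp add: dual_gap_def primal_gap_def xstar_def)
  ultimately show ?thesis by (simp add: divide_right_mono)
qed

text \<open>Compare the variational inequalities of \<open>y\<^sub>+\<close> (projection) and of \<open>y\<^sup>*(z)\<close>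
  (dual solution) via \<open>xm_cross_monotone\<close>.\<close>
lemma primal_gap_le:
  assumes a: "a > 0" and y: "y \<in> prob_simplex"
  shows "mu * (norm (primal_gap a y z))\<^sup>2
    \<le> (1 / a + L * L / mu) * norm (y - yplus a y z) * norm (dual_gap a y z)"
proof -
  let ?yp = "yplus a y z" and ?ys = "ystar z"
  let ?g = "F (xm y z)" and ?gp = "F (xm ?yp z)"
  have yp: "?yp \<in> prob_simplex" by (rule yplus_in_prob_simplex)
  have "mu * (norm (xm ?yp z - xstar z))\<^sup>2 \<le> (F (xm ?ys z) - ?gp) \<bullet> (?yp - ?ys)"
    using xm_cross_monotone[OF ystar_in_prob_simplex yp, of z] by (simp add: xstar_def norm_minus_commute)
  moreover have "F (xm ?ys z) \<bullet> (?yp - ?ys) \<le> 0"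
    using dual_solution_ystar[of z] yp by (simp add: dual_solution_def)
  ultimately have cross: "mu * (norm (xm ?yp z - xstar z))\<^sup>2 \<le> - (?gp \<bullet> (?yp - ?ys))"
    unfolding inner_diff_left by linarith
  have "(y + a *\<^sub>R ?g - ?yp) \<bullet> (?ys - ?yp) \<le> 0"
    unfolding yplus_def by (rule proj_simplex_obtuse[OF ystar_in_prob_simplex])
  then have "a * (?g \<bullet> (?ys - ?yp)) \<le> (?yp - y) \<bullet> (?ys - ?yp)"
    by (simp add: inner_add_left inner_diff_left algebra_simps)
  also have "\<dots> \<le> norm (y - ?yp) * norm (?yp - ?ys)"
    using norm_cauchy_schwarz[of "?yp - y" "?ys - ?yp"] by (simp add: norm_minus_commute)
  finally have proj: "?g \<bullet> (?ys - ?yp) \<le> 1 / a * (norm (y - ?yp) * norm (?yp - ?ys))"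
    using a by (simp add: field_simps mult.commute)
  have "norm (?gp - ?g) \<le> L * (L / mu * norm (y - ?yp))"
    using F_lipschitz[of "xm ?yp z" "xm y z"] xm_lipschitz_y[OF yp y, of z] L_pos
    by (smt (verit, best) mult_left_mono norm_minus_commute)
  then have "norm (?gp - ?g) * norm (?ys - ?yp) \<le> L * (L / mu * norm (y - ?yp)) * norm (?ys - ?yp)"
    by (rule mult_right_mono) simp
  then have lip: "(?gp - ?g) \<bullet> (?ys - ?yp) \<le> L * L / mu * norm (y - ?yp) * norm (?yp - ?ys)"
    using norm_cauchy_schwarz[of "?gp - ?g" "?ys - ?yp"] by (simp add: norm_minus_commute)
  have "- (?gp \<bullet> (?yp - ?ys)) = ?g \<bullet> (?ys - ?yp) + (?gp - ?g) \<bullet> (?ys - ?yp)"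
    by (simp add: inner_diff_left inner_diff_right)
  then show ?thesis using cross proj lip by (simp add: primal_gap_def dual_gap_def algebra_simps)
qed

lemma fixed_point_KKT:
  assumes a: "a > 0" and y: "y \<in> prob_simplex" and xfix: "xm y z = z" and yfix: "yplus a y z = y"
  shows "KKT F gF z y (psi F z) (\<chi> i. psi F z - F z $ i)"
proof -
  have supp: "psi F z \<le> F z $ i" if "y $ i > 0" for i
  proof -
    obtain j where j: "psi F z = F z $ j" using ex_component_eq_Max by (metis psi_def)
    have "proj_simplex (y + a *\<^sub>R F z) = y" using yfix xfix by (simp add: yplus_def)
    then show ?thesis
      using proj_simplex_support[of "y + a *\<^sub>R F z" i j] that a j by simp
  qed
  have le: "F z $ i \<le> psi F z" for i by (simp add: psi_def)
  have "gradx_f gF z y = 0"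
    using gK_xm_eq_0[OF y, of z] xfix by (simp add: gradx_K_def)
  then show ?thesis
    unfolding KKT_def
  proof (intro conjI allI)
    fix i
    show "(\<chi> i. psi F z - F z $ i) $ i * y $ i = 0"
      using supp[of i] le[of i] prob_simplex_not_pos_eq_0[OF y, of i] by (cases "y $ i > 0") auto
  qed (use y le in \<open>auto simp: gradx_f_def prob_simplex_iff\<close>)
qed

lemma limit_fixed_point:
  assumes a: "a > 0" and Y: "\<And>k. Y k \<in> prob_simplex" and y: "y \<in> prob_simplex"
    and YL: "Y \<longlonglongrightarrow> y" and ZL: "Z \<longlonglongrightarrow> z"
    and ygap: "(\<lambda>k. Y k - yplus a (Y k) (Z k)) \<longlonglongrightarrow> 0"
    and xgap: "(\<lambda>k. Z k - xm (Y k) (Z k)) \<longlonglongrightarrow> 0"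
  shows "xm y z = z" and "yplus a y z = y"
proof -
  have "(\<lambda>k. Z k - xm (Y k) (Z k)) \<longlonglongrightarrow> z - xm y z"
    by (intro tendsto_intros ZL tendsto_xm[OF Y y YL ZL])
  with xgap show "xm y z = z" using LIMSEQ_unique by fastforce
  have "(\<lambda>k. Y k - yplus a (Y k) (Z k)) \<longlonglongrightarrow> y - yplus a y z"
    by (intro tendsto_intros YL tendsto_yplus[OF Y y YL ZL])
  with ygap show "yplus a y z = y" using LIMSEQ_unique by fastforce
qed

lemma yplus_component_eventually_zero:
  assumes a: "a > 0" and Y: "\<And>k. Y k \<in> prob_simplex" and y: "y \<in> prob_simplex"
    and YL: "Y \<longlonglongrightarrow> y" and ZL: "Z \<longlonglongrightarrow> z" and xfix: "xm y z = z" and yfix: "yplus a y z = y"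
    and less: "F z $ i < F z $ j"
  shows "\<forall>\<^sub>F k in sequentially. yplus a (Y k) (Z k) $ i = 0"
proof -
  define q where "q k = (Y k + a *\<^sub>R F (xm (Y k) (Z k))) - yplus a (Y k) (Z k)" for k
  have "q \<longlonglongrightarrow> (y + a *\<^sub>R F z) - y"
    unfolding q_def using tendsto_yplus[OF Y y YL ZL, of a] tendsto_xm[OF Y y YL ZL]
    by (intro tendsto_intros YL isCont_tendsto_compose[OF isCont_F]) (simp_all add: xfix yfix)
  then have "(\<lambda>k. q k $ i - q k $ j) \<longlonglongrightarrow> a * (F z $ i - F z $ j)"
    by (auto intro!: tendsto_eq_intros simp: algebra_simps)
  moreover have "a * (F z $ i - F z $ j) < 0" using a less by (simp add: mult_pos_neg)
  ultimately have "\<forall>\<^sub>F k in sequentially. q k $ i < q k $ j"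
    by (auto dest: order_tendstoD(2))
  then show ?thesis
  proof (rule eventually_mono)
    fix k assume "q k $ i < q k $ j"
    then show "yplus a (Y k) (Z k) $ i = 0"
      using proj_simplex_support[of "Y k + a *\<^sub>R F (xm (Y k) (Z k))" i j]
        prob_simplex_not_pos_eq_0[OF yplus_in_prob_simplex]
      by (force simp: q_def yplus_def)
  qed
qed

lemma ystar_component_eventually_zero:
  assumes ZL: "(\<lambda>k. xstar (Z k)) \<longlonglongrightarrow> z" and less: "F z $ i < F z $ j"
  shows "\<forall>\<^sub>F k in sequentially. ystar (Z k) $ i = 0"
proof -
  have "(\<lambda>k. F (xstar (Z k)) $ i - F (xstar (Z k)) $ j) \<longlonglongrightarrow> F z $ i - F z $ j"
    by (intro tendsto_intros isCont_tendsto_compose[OF isCont_F] ZL)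
  then have "\<forall>\<^sub>F k in sequentially. F (xstar (Z k)) $ i - F (xstar (Z k)) $ j < 0"
    by (rule order_tendstoD(2)) (use less in simp)
  then show ?thesis
  proof (rule eventually_mono)
    fix k assume "F (xstar (Z k)) $ i - F (xstar (Z k)) $ j < 0"
    then have "\<not> ystar (Z k) $ i > 0"
      using simplex_variational_support[OF ystar_in_prob_simplex, of "F (xstar (Z k))" "Z k" i j]
        dual_solution_ystar[of "Z k"] by (auto simp: dual_solution_def xstar_def)
    then show "ystar (Z k) $ i = 0" by (rule prob_simplex_not_pos_eq_0[OF ystar_in_prob_simplex])
  qed
qed

lemma limit_direction_support:
  assumes a: "a > 0" and Y: "\<And>k. Y k \<in> prob_simplex" and y: "y \<in> prob_simplex"
    and YL: "Y \<longlonglongrightarrow> y" and ZL: "Z \<longlonglongrightarrow> z" and xfix: "xm y z = z" and yfix: "yplus a y z = y"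
    and XL: "(\<lambda>k. xstar (Z k)) \<longlonglongrightarrow> z" and VL: "(\<lambda>k. sgn (dual_gap a (Y k) (Z k))) \<longlonglongrightarrow> v"
    and less: "F z $ i < psi F z"
  shows "v $ i = 0"
proof -
  obtain j where "psi F z = F z $ j" using ex_component_eq_Max by (metis psi_def)
  with less have "F z $ i < F z $ j" by simp
  then have "\<forall>\<^sub>F k in sequentially. yplus a (Y k) (Z k) $ i = 0 \<and> ystar (Z k) $ i = 0"
    using yplus_component_eventually_zero[OF a Y y YL ZL xfix yfix] ystar_component_eventually_zero[OF XL]
    by (simp add: eventually_conj)
  then have "\<forall>\<^sub>F k in sequentially. 0 = sgn (dual_gap a (Y k) (Z k)) $ i"
    by (rule eventually_mono) (simp add: sgn_div_norm dual_gap_def)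
  then have "(\<lambda>k. sgn (dual_gap a (Y k) (Z k)) $ i) \<longlonglongrightarrow> 0"
    by (rule Lim_transform_eventually[OF tendsto_const])
  moreover have "(\<lambda>k. sgn (dual_gap a (Y k) (Z k)) $ i) \<longlonglongrightarrow> v $ i" by (intro tendsto_intros VL)
  ultimately show ?thesis using LIMSEQ_unique by metis
qed

lemma limit_direction_kernel:
  assumes "V \<longlonglongrightarrow> v" "X \<longlonglongrightarrow> x" "(\<lambda>k. \<Sum>i\<in>UNIV. V k $ i *\<^sub>R gF i (X k)) \<longlonglongrightarrow> 0"
  shows "(\<Sum>i\<in>UNIV. v $ i *\<^sub>R gF i x) = 0"
proof -
  have "(\<lambda>k. \<Sum>i\<in>UNIV. V k $ i *\<^sub>R gF i (X k)) \<longlonglongrightarrow> (\<Sum>i\<in>UNIV. v $ i *\<^sub>R gF i x)"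
    by (intro tendsto_intros isCont_tendsto_compose[OF isCont_gF] assms(1,2))
  from LIMSEQ_unique[OF this assms(3)] show ?thesis .
qed

lemma no_convergent_vanishing_gap_ratio:
  assumes sc: "strict_complementarity F gF" and a: "a > 0"
    and Y: "\<And>k. Y k \<in> prob_simplex" and y: "y \<in> prob_simplex"
    and YL: "Y \<longlonglongrightarrow> y" and ZL: "Z \<longlonglongrightarrow> z"
    and VL: "(\<lambda>k. sgn (dual_gap a (Y k) (Z k))) \<longlonglongrightarrow> v" and v: "v \<noteq> 0"
    and ratio: "(\<lambda>k. norm (primal_gap a (Y k) (Z k)) / norm (dual_gap a (Y k) (Z k))) \<longlonglongrightarrow> 0"
    and ygap: "(\<lambda>k. Y k - yplus a (Y k) (Z k)) \<longlonglongrightarrow> 0"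
    and xgap: "(\<lambda>k. Z k - xm (Y k) (Z k)) \<longlonglongrightarrow> 0"
  shows False
proof -
  have xfix: "xm y z = z" and yfix: "yplus a y z = y"
    using limit_fixed_point[OF a Y y YL ZL ygap xgap] by auto
  have "(\<lambda>k. yplus a (Y k) (Z k)) \<longlonglongrightarrow> y" using tendsto_yplus[OF Y y YL ZL, of a] yfix by simp
  then have XpL: "(\<lambda>k. xm (yplus a (Y k) (Z k)) (Z k)) \<longlonglongrightarrow> z"
    using tendsto_xm[OF yplus_in_prob_simplex y _ ZL] xfix by simp
  have "(\<lambda>k. norm (primal_gap a (Y k) (Z k))) \<longlonglongrightarrow> 0"
  proof (rule Lim_null_comparison[OF always_eventually])
    show "\<forall>k. norm (norm (primal_gap a (Y k) (Z k)))
        \<le> 2 * (norm (primal_gap a (Y k) (Z k)) / norm (dual_gap a (Y k) (Z k)))"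
      using norm_primal_gap_le_ratio by simp
  qed (rule tendsto_mult_right_zero[OF ratio])
  then have "(\<lambda>k. xm (yplus a (Y k) (Z k)) (Z k) - primal_gap a (Y k) (Z k)) \<longlonglongrightarrow> z - 0"
    by (rule tendsto_diff[OF XpL tendsto_norm_zero_cancel])
  then have XL: "(\<lambda>k. xstar (Z k)) \<longlonglongrightarrow> z" by (simp add: primal_gap_def)
  have kkt: "KKT F gF z y (psi F z) (\<chi> i. psi F z - F z $ i)"
    by (rule fixed_point_KKT[OF a y xfix yfix])
  have supp: "v $ i = 0" if "(\<chi> i. psi F z - F z $ i) $ i \<noteq> 0" for i
  proof (rule limit_direction_support[OF a Y y YL ZL xfix yfix XL VL])
    show "F z $ i < psi F z" using that by (simp add: psi_def order.not_eq_order_implies_strict)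
  qed
  have "(\<lambda>k. \<Sum>i\<in>UNIV. sgn (dual_gap a (Y k) (Z k)) $ i) \<longlonglongrightarrow> (\<Sum>i\<in>UNIV. v $ i)"
    by (intro tendsto_intros VL)
  moreover have "(\<Sum>i\<in>UNIV. sgn (dual_gap a (Y k) (Z k)) $ i) = 0" for k
    by (simp add: sgn_div_norm sum_distrib_left[symmetric] sum_dual_gap)
  ultimately have sum: "(\<Sum>i\<in>UNIV. v $ i) = 0" by (simp add: LIMSEQ_const_iff)
  have "(\<lambda>k. \<Sum>i\<in>UNIV. sgn (dual_gap a (Y k) (Z k)) $ i *\<^sub>R gF i (xm (yplus a (Y k) (Z k)) (Z k))) \<longlonglongrightarrow> 0"
  proof (rule Lim_null_comparison[OF always_eventually])
    show "\<forall>k. norm (\<Sum>i\<in>UNIV. sgn (dual_gap a (Y k) (Z k)) $ i *\<^sub>R gF i (xm (yplus a (Y k) (Z k)) (Z k)))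
        \<le> (p + L) * (norm (primal_gap a (Y k) (Z k)) / norm (dual_gap a (Y k) (Z k)))"
      using gF_combination_sgn_dual_gap_le by blast
  qed (rule tendsto_mult_right_zero[OF ratio])
  then have ker: "(\<Sum>i\<in>UNIV. v $ i *\<^sub>R gF i z) = 0"
    by (rule limit_direction_kernel[OF VL XpL])
  show False using strict_complementarity_null_direction[OF sc kkt sum supp ker] v by simp
qed

lemma no_vanishing_gap_ratio:
  assumes sc: "strict_complementarity F gF" and a: "a > 0"
    and Y: "\<And>k. Y k \<in> prob_simplex" and Z: "\<And>k. norm (Z k) \<le> R"
    and W: "\<And>k. dual_gap a (Y k) (Z k) \<noteq> 0"
    and ratio: "(\<lambda>k. norm (primal_gap a (Y k) (Z k)) / norm (dual_gap a (Y k) (Z k))) \<longlonglongrightarrow> 0"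
    and ygap: "(\<lambda>k. Y k - yplus a (Y k) (Z k)) \<longlonglongrightarrow> 0"
    and xgap: "(\<lambda>k. Z k - xm (Y k) (Z k)) \<longlonglongrightarrow> 0"
  shows False
proof -
  let ?V = "\<lambda>k. sgn (dual_gap a (Y k) (Z k))"
  have "compact (prob_simplex \<times> cball (0::real^'n) R \<times> sphere (0::real^'m) 1)"
    by (intro compact_Times compact_prob_simplex compact_cball compact_sphere)
  moreover have "\<forall>k. (Y k, Z k, ?V k) \<in> prob_simplex \<times> cball 0 R \<times> sphere 0 1"
    using Y Z W by (simp add: norm_sgn)
  ultimately obtain l r where "l \<in> prob_simplex \<times> cball 0 R \<times> sphere 0 1" "strict_mono r"
    and lim: "((\<lambda>k. (Y k, Z k, ?V k)) \<circ> r) \<longlonglongrightarrow> l"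
    by (elim seq_compactE[OF compact_imp_seq_compact])
  moreover obtain y z v where l: "l = (y, z, v)" by (metis prod.exhaust)
  ultimately have y: "y \<in> prob_simplex" and v: "v \<noteq> 0" and r: "strict_mono r" by auto
  have sub: "(\<lambda>k. f (r k)) \<longlonglongrightarrow> c" if "f \<longlonglongrightarrow> c" for f :: "nat \<Rightarrow> 'b::real_normed_vector" and c
    using LIMSEQ_subseq_LIMSEQ[OF that r] by (simp add: comp_def)
  show False
  proof (rule no_convergent_vanishing_gap_ratio[OF sc a Y y _ _ _ v sub[OF ratio] sub[OF ygap] sub[OF xgap]])
    show "(\<lambda>k. Y (r k)) \<longlonglongrightarrow> y" using tendsto_fst[OF lim] l by (simp add: comp_def)
    show "(\<lambda>k. Z (r k)) \<longlonglongrightarrow> z" using tendsto_fst[OF tendsto_snd[OF lim]] l by (simp add: comp_def)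
    show "(\<lambda>k. ?V (r k)) \<longlonglongrightarrow> v" using tendsto_snd[OF tendsto_snd[OF lim]] l by (simp add: comp_def)
  qed
qed

lemma error_bound:
  assumes sc: "strict_complementarity F gF" and a: "a > 0" and eps: "\<epsilon> > 0"
  shows "\<exists>C>0. \<forall>y z. y \<in> prob_simplex \<longrightarrow> norm z \<le> R \<longrightarrow>
     (norm (primal_gap a y z))\<^sup>2 \<le> \<epsilon> * (norm (z - xm y z))\<^sup>2 + C * (norm (y - yplus a y z))\<^sup>2"
proof (rule ccontr)
  assume neg: "\<not> ?thesis"
  txt \<open>Violators for \<open>C = k + 1\<close> make \<open>primal_gap_le\<close> force the gap ratio to \<open>0\<close>.\<close>
  have "\<exists>y z. y \<in> prob_simplex \<and> norm z \<le> R \<and>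
     \<epsilon> * (norm (z - xm y z))\<^sup>2 + (real k + 1) * (norm (y - yplus a y z))\<^sup>2 < (norm (primal_gap a y z))\<^sup>2" for k
  proof -
    have "real k + 1 > 0" by simp
    then show ?thesis using neg by (meson not_le)
  qed
  then obtain Y Z where Y: "\<And>k. Y k \<in> prob_simplex" and Z: "\<And>k. norm (Z k) \<le> R"
    and bad: "\<And>k. \<epsilon> * (norm (Z k - xm (Y k) (Z k)))\<^sup>2 + (real k + 1) * (norm (Y k - yplus a (Y k) (Z k)))\<^sup>2
      < (norm (primal_gap a (Y k) (Z k)))\<^sup>2"
    by metis
  define u w e d where "u k = norm (primal_gap a (Y k) (Z k))" and "w k = norm (dual_gap a (Y k) (Z k))"
    and "e k = norm (Y k - yplus a (Y k) (Z k))" and "d k = norm (Z k - xm (Y k) (Z k))" for k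
  have e_le: "(real k + 1) * (e k)\<^sup>2 \<le> (u k)\<^sup>2" and d_le: "\<epsilon> * (d k)\<^sup>2 \<le> (u k)\<^sup>2"
    and u_pos: "u k > 0" for k
  proof -
    have nonneg: "0 \<le> \<epsilon> * (d k)\<^sup>2" "0 \<le> (real k + 1) * (e k)\<^sup>2" using eps by auto
    moreover note less = bad[of k, folded u_def e_def d_def]
    ultimately show "(real k + 1) * (e k)\<^sup>2 \<le> (u k)\<^sup>2" "\<epsilon> * (d k)\<^sup>2 \<le> (u k)\<^sup>2"
      by linarith+
    from nonneg less have "0 < (u k)\<^sup>2" by linarith
    then show "u k > 0" by (simp add: u_def)
  qed
  have w_pos: "w k > 0" for k
    using u_pos[of k] norm_primal_gap_le[of a "Y k" "Z k"] by (cases "w k = 0") (auto simp: u_def w_def)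
  have "(u k / w k)\<^sup>2 \<le> ((1 / a + L * L / mu) / mu)\<^sup>2 / (real k + 1)" for k
    using primal_gap_le[OF a Y, of k "Z k"]
    by (intro sq_ratio_le[OF u_pos w_pos mu_pos _ _ e_le]) (auto simp: u_def w_def e_def)
  moreover have "(\<lambda>k. ((1 / a + L * L / mu) / mu)\<^sup>2 / (real k + 1)) \<longlonglongrightarrow> 0"
    using tendsto_mult_right_zero[OF LIMSEQ_inverse_real_of_nat, of "((1 / a + L * L / mu) / mu)\<^sup>2"]
    by (simp add: divide_inverse add.commute)
  ultimately have ratio: "(\<lambda>k. u k / w k) \<longlonglongrightarrow> 0" by (rule tendsto_zero_if_sq_le)
  have "u \<longlonglongrightarrow> 0"
  proof (rule Lim_null_comparison[OF always_eventually])
    show "\<forall>k. norm (u k) \<le> 2 * (u k / w k)" using norm_primal_gap_le_ratio by (simp add: u_def w_def)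
  qed (rule tendsto_mult_right_zero[OF ratio])
  then have u2: "(\<lambda>k. (u k)\<^sup>2) \<longlonglongrightarrow> 0" using tendsto_power[of u 0 sequentially 2] by simp
  have "(e k)\<^sup>2 \<le> (u k)\<^sup>2" for k
    using e_le[of k] mult_right_mono[of 1 "real k + 1" "(e k)\<^sup>2"] by simp
  then have "e \<longlonglongrightarrow> 0" using u2 by (rule tendsto_zero_if_sq_le)
  have "(d k)\<^sup>2 \<le> (u k)\<^sup>2 / \<epsilon>" for k using d_le[of k] eps by (simp add: field_simps)
  then have "d \<longlonglongrightarrow> 0" using tendsto_divide_zero[OF u2] by (rule tendsto_zero_if_sq_le)
  show False
  proof (rule no_vanishing_gap_ratio[OF sc a Y Z])
    show "dual_gap a (Y k) (Z k) \<noteq> 0" for k using w_pos[of k] by (auto simp: w_def)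
    show "(\<lambda>k. norm (primal_gap a (Y k) (Z k)) / norm (dual_gap a (Y k) (Z k))) \<longlonglongrightarrow> 0"
      using ratio by (simp add: u_def w_def)
    show "(\<lambda>k. Y k - yplus a (Y k) (Z k)) \<longlonglongrightarrow> 0"
      using \<open>e \<longlonglongrightarrow> 0\<close> by (simp add: e_def[abs_def] tendsto_norm_zero_iff)
    show "(\<lambda>k. Z k - xm (Y k) (Z k)) \<longlonglongrightarrow> 0"
      using \<open>d \<longlonglongrightarrow> 0\<close> by (simp add: d_def[abs_def] tendsto_norm_zero_iff)
  qed
qed

section \<open>One step of Smoothed-GDA\<close>

lemma K_gradient_step:
  assumes y: "y \<in> prob_simplex" and c: "0 < c" "c * (p + L) \<le> 1"
  shows "K (x - c *\<^sub>R gK x z y) z y \<le> K x z y - (norm (c *\<^sub>R gK x z y))\<^sup>2 / (2 * c)"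
proof -
  let ?g = "gK x z y"
  have "K (x + - (c *\<^sub>R ?g)) z y \<le> K x z y + ?g \<bullet> (- (c *\<^sub>R ?g)) + (p + L) / 2 * (norm (- (c *\<^sub>R ?g)))\<^sup>2"
    by (rule K_upper_quadratic[OF y])
  moreover have "?g \<bullet> (- (c *\<^sub>R ?g)) = - ((norm (c *\<^sub>R ?g))\<^sup>2 / c)"
    using c by (simp add: power2_eq_square power2_norm_eq_inner[symmetric])
  moreover have "(p + L) / 2 * (norm (c *\<^sub>R ?g))\<^sup>2 \<le> (norm (c *\<^sub>R ?g))\<^sup>2 / (2 * c)"
    using c mult_right_mono[of "p + L" "1 / c" "(norm (c *\<^sub>R ?g))\<^sup>2"] by (simp add: field_simps)
  ultimately show ?thesis by simp
qed

lemma phi_decrease_decomposition: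
  assumes y: "y \<in> prob_simplex" and y': "y' \<in> prob_simplex" and Kx: "K x' z y \<le> K x z y - A"
  shows "phi F p x y z - phi F p x' y' z' \<ge> A + F x' \<bullet> (y' - y) + 2 * ((F (xm y' z) - F x') \<bullet> (y' - y))
      + p * ((x' - z) \<bullet> (z' - z)) - p / 2 * (norm (z' - z))\<^sup>2 - 2 * p * ((xm y' z' - xstar z) \<bullet> (z' - z))"
proof -
  let ?x2 = "xm y' z" and ?xh = "xm y' z'"
  define q where "q w = p / 2 * ((norm (w - z'))\<^sup>2 - (norm (w - z))\<^sup>2)" for w
  have shift: "K w z' y' - K w z y' = q w" for w by (simp add: Kfun_def q_def algebra_simps)
  have K_part: "K x z y - K x' z' y' \<ge> A - F x' \<bullet> (y' - y) - q x'"
    using Kx shift[of x'] K_diff_y[of x' z y' y] by linarith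
  have "dfun F p y z \<le> K ?x2 z y" using dfun_eq_K_xm[OF y] xm_minimal[OF y] by simp
  moreover have "K ?x2 z y' \<le> K ?xh z y'" by (rule xm_minimal[OF y'])
  ultimately have d_part: "dfun F p y' z' - dfun F p y z \<ge> F ?x2 \<bullet> (y' - y) + q ?xh"
    using dfun_eq_K_xm[OF y', of z'] shift[of ?xh] K_diff_y[of ?x2 z y' y] by linarith
  have "Kmax z' (xstar z) - Kmax z (xstar z) = q (xstar z)"
    by (simp add: Kmax_def q_def algebra_simps)
  then have P_part: "Pfun F p z - Pfun F p z' \<ge> - q (xstar z)"
    using Pfun_eq_Kmax_xstar[of z] Pfun_le_Kmax[of z' "xstar z"] by linarith
  have sum3: "a1 \<le> b1 \<Longrightarrow> a2 \<le> b2 \<Longrightarrow> a3 \<le> b3 \<Longrightarrow> a1 + 2 * a2 + 2 * a3 \<le> b1 + 2 * b2 + 2 * b3"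
    for a1 a2 a3 b1 b2 b3 :: real by linarith
  have "phi F p x y z - phi F p x' y' z' \<ge> A + F x' \<bullet> (y' - y) + 2 * ((F ?x2 - F x') \<bullet> (y' - y))
      - q x' + 2 * q ?xh - 2 * q (xstar z)"
    using sum3[OF K_part d_part P_part] by (simp add: phi_def inner_diff_left algebra_simps)
  moreover have "- q x' + 2 * q ?xh - 2 * q (xstar z)
      = p * ((x' - z) \<bullet> (z' - z)) - p / 2 * (norm (z' - z))\<^sup>2 - 2 * p * ((?xh - xstar z) \<bullet> (z' - z))"
    by (simp add: q_def norm_diff_sq_shift inner_diff_left algebra_simps)
  ultimately show ?thesis by linarith
qed

definition prox_factor :: "real \<Rightarrow> real" where "prox_factor c = 1 + 1 / (c * mu)"

lemma gda_step_distances: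
  assumes c: "0 < c" and \<alpha>: "0 < \<alpha>" and \<beta>: "0 < \<beta>" and y: "y \<in> prob_simplex"
    and x': "x' = x - c *\<^sub>R gK x z y" and y': "y' = proj_simplex (y + \<alpha> *\<^sub>R F x')"
    and z': "z' = z + \<beta> *\<^sub>R (x' - z)"
  shows "norm (y - yplus \<alpha> y z) \<le> norm (y - y') + \<alpha> * L * prox_factor c * norm (x - x')"
    and "norm (xm y' z - x') \<le> L / mu * norm (y - y') + prox_factor c * norm (x - x')"
    and "norm (xm y' z' - xstar z) \<le> p / mu * norm (z - z') + L / mu * (\<alpha> * L * prox_factor c) * norm (x - x')
          + norm (primal_gap \<alpha> y z)"
    and "norm (z - xm y z) \<le> norm (z - z') / \<beta> + prox_factor c * norm (x - x')"
proof -
  let ?a = "norm (x - x')" and ?yp = "yplus \<alpha> y z"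
  have y's: "y' \<in> prob_simplex" by (simp add: y' proj_simplex_in)
  have "norm (x - xm y z) \<le> ?a / (c * mu)"
    using dist_xm_le[OF y, of x z] c by (simp add: x' divide_divide_eq_left)
  then have x'_near: "norm (x' - xm y z) \<le> prox_factor c * ?a"
    using norm_triangle_ineq4[of "x' - x" "xm y z - x"]
    by (simp add: prox_factor_def algebra_simps norm_minus_commute)
  have "norm (y' - ?yp) \<le> norm ((y + \<alpha> *\<^sub>R F x') - (y + \<alpha> *\<^sub>R F (xm y z)))"
    unfolding y' yplus_def by (rule proj_simplex_nonexpansive)
  also have "\<dots> = \<alpha> * norm (F x' - F (xm y z))" using \<alpha> by (simp add: scaleR_diff_right[symmetric])
  also have "\<dots> \<le> \<alpha> * (L * (prox_factor c * ?a))"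
    using \<alpha> L_pos F_lipschitz[of x' "xm y z"] x'_near
    by (intro mult_left_mono order.trans[OF _ mult_left_mono[OF x'_near]]) auto
  finally have yp_near: "norm (y' - ?yp) \<le> \<alpha> * L * prox_factor c * ?a" by (simp add: mult_ac)
  show "norm (y - ?yp) \<le> norm (y - y') + \<alpha> * L * prox_factor c * ?a"
    using norm_triangle_ineq4[of "y - y'" "?yp - y'"] yp_near by (simp add: norm_minus_commute)
  show "norm (xm y' z - x') \<le> L / mu * norm (y - y') + prox_factor c * ?a"
    using norm_triangle_ineq4[of "xm y' z - xm y z" "x' - xm y z"] x'_near xm_lipschitz_y[OF y's y, of z]
    by (simp add: norm_minus_commute)
  have "norm (xm y' z - xm ?yp z) \<le> L / mu * (\<alpha> * L * prox_factor c * ?a)"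
    using xm_lipschitz_y[OF y's yplus_in_prob_simplex, of z] yp_near L_pos mu_pos
    by (smt (verit) divide_nonneg_pos mult_left_mono)
  then show "norm (xm y' z' - xstar z) \<le> p / mu * norm (z - z') + L / mu * (\<alpha> * L * prox_factor c) * ?a
      + norm (primal_gap \<alpha> y z)"
    using xm_lipschitz_z[OF y's, of z' z] norm_triangle_ineq[of "xm y' z' - xm y' z" "xm y' z - xm ?yp z"]
      norm_triangle_ineq[of "xm y' z' - xm ?yp z" "xm ?yp z - xstar z"]
    by (simp add: primal_gap_def norm_minus_commute mult_ac)
  have "norm (z - x') = norm (z - z') / \<beta>" using \<beta> by (simp add: z' norm_minus_commute)
  then show "norm (z - xm y z) \<le> norm (z - z') / \<beta> + prox_factor c * ?a"
    using norm_triangle_ineq[of "z - x'" "x' - xm y z"] x'_near by simp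
qed

definition beta_max :: "real \<Rightarrow> real \<Rightarrow> real \<Rightarrow> real" where
  "beta_max c \<alpha> C = min (min (mu / (8 * p)) (1 / (128 * c * p * (L / mu * (\<alpha> * L * prox_factor c))\<^sup>2)))
                          (min (1 / (2 * c * p * (prox_factor c)\<^sup>2)) (1 / (128 * p * \<alpha> * C)))"

lemma prox_factor_pos: "0 < c \<Longrightarrow> 0 < prox_factor c"
  using mu_pos by (simp add: prox_factor_def add_pos_pos)

lemma beta_max_pos: "0 < c \<Longrightarrow> 0 < \<alpha> \<Longrightarrow> 0 < C \<Longrightarrow> 0 < beta_max c \<alpha> C"
  using mu_pos p_pos L_pos prox_factor_pos[of c] by (simp add: beta_max_def)

lemma less_beta_maxD:
  assumes "0 < c" "0 < \<alpha>" "0 < C" "\<beta> < beta_max c \<alpha> C"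
  shows "\<beta> \<le> mu / (8 * p)" "\<beta> * (128 * c * p * (L / mu * (\<alpha> * L * prox_factor c))\<^sup>2) \<le> 1"
    "\<beta> * (2 * c * p * (prox_factor c)\<^sup>2) \<le> 1" "\<beta> * (128 * p * \<alpha> * C) \<le> 1"
  using assms mu_pos p_pos L_pos prox_factor_pos[of c]
  by (auto simp: beta_max_def field_simps)

lemma descent_step:
  assumes c: "0 < c" "c * (p + L) \<le> 1"
    and \<alpha>: "0 < \<alpha>" "\<alpha> * (11 * L) < 1" "\<alpha> * (4 * L * (prox_factor c)\<^sup>2) < 1"
    and \<beta>: "0 < \<beta>" "\<beta> \<le> 1 / 36" "\<beta> < beta_max c \<alpha> C" and C: "0 < C"
    and y: "y \<in> prob_simplex"
    and EB: "(norm (primal_gap \<alpha> y z))\<^sup>2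
      \<le> 1 / 128 * (norm (z - xm y z))\<^sup>2 + C * (norm (y - yplus \<alpha> y z))\<^sup>2"
    and x': "x' = x - c *\<^sub>R gK x z y" and y': "y' = proj_simplex (y + \<alpha> *\<^sub>R F x')"
    and z': "z' = z + \<beta> *\<^sub>R (x' - z)"
  shows "phi F p x y z - phi F p x' y' z' \<ge> 1 / (16 * c) * (norm (x - x'))\<^sup>2
    + 1 / (16 * \<alpha>) * (norm (y - proj_simplex (y + \<alpha> *\<^sub>R F (xm y z))))\<^sup>2 + p / (16 * \<beta>) * (norm (z - z'))\<^sup>2"
proof -
  define a b s e where "a = norm (x - x')" and "b = norm (y - y')" and "s = norm (z - z')"
    and "e = norm (y - yplus \<alpha> y z)"
  define Q where "Q = norm (xm y' z' - xstar z)"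
  let ?\<sigma> = "prox_factor c" and ?x2 = "xm y' z"
  have y's: "y' \<in> prob_simplex" by (simp add: y' proj_simplex_in)
  note dist = gda_step_distances[OF c(1) \<alpha>(1) \<beta>(1) y x' y' z']
  have "K x' z y \<le> K x z y - a\<^sup>2 / (2 * c)"
    using K_gradient_step[OF y c, of x z] by (simp add: a_def x')
  then have dec: "phi F p x y z - phi F p x' y' z' \<ge> a\<^sup>2 / c / 2 + F x' \<bullet> (y' - y)
      + 2 * ((F ?x2 - F x') \<bullet> (y' - y)) + p * ((x' - z) \<bullet> (z' - z)) - p / 2 * s\<^sup>2
      - 2 * p * ((xm y' z' - xstar z) \<bullet> (z' - z))"
    using phi_decrease_decomposition[OF y y's] by (simp add: s_def norm_minus_commute)
  have Y1: "b\<^sup>2 / \<alpha> \<le> F x' \<bullet> (y' - y)"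
    using proj_simplex_step_inner[OF y \<alpha>(1), of "F x'"] by (simp add: b_def y')
  have "norm (F x' - F ?x2) \<le> L * norm (?x2 - x')"
    using F_lipschitz[of x' ?x2] by (simp add: norm_minus_commute)
  also have "\<dots> \<le> L * (L / mu * b + ?\<sigma> * a)"
    using dist(2) L_pos by (intro mult_left_mono) (auto simp: a_def b_def)
  finally have F_near: "norm (F x' - F ?x2) \<le> L * (L / mu * b + ?\<sigma> * a)" .
  have "(F x' - F ?x2) \<bullet> (y' - y) \<le> norm (F x' - F ?x2) * norm (y' - y)"
    by (rule norm_cauchy_schwarz)
  also have "\<dots> = norm (F x' - F ?x2) * b" by (simp add: b_def norm_minus_commute)
  also have "\<dots> \<le> L * (L / mu * b + ?\<sigma> * a) * b"
    by (rule mult_right_mono[OF F_near]) (simp add: b_def)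
  finally have "(F x' - F ?x2) \<bullet> (y' - y) \<le> L * (L / mu * b + ?\<sigma> * a) * b" .
  then have Y2: "- (2 * L * (L / mu * b + ?\<sigma> * a) * b) \<le> 2 * ((F ?x2 - F x') \<bullet> (y' - y))"
    by (simp add: inner_diff_left)
  have "(x' - z) \<bullet> (z' - z) = \<beta> * (norm (x' - z))\<^sup>2"
    by (simp add: z' power2_norm_eq_inner)
  moreover have "s = \<beta> * norm (x' - z)" using \<beta>(1) by (simp add: s_def z')
  ultimately have Z1: "p * ((x' - z) \<bullet> (z' - z)) = p * s\<^sup>2 / \<beta>"
    using \<beta>(1) by (simp add: power2_eq_square)
  have "(xm y' z' - xstar z) \<bullet> (z' - z) \<le> Q * s"
    using norm_cauchy_schwarz[of "xm y' z' - xstar z" "z' - z"]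
    by (simp add: Q_def s_def norm_minus_commute[of z'])
  then have Z2: "2 * p * ((xm y' z' - xstar z) \<bullet> (z' - z)) \<le> 2 * p * Q * s"
    using p_pos by (simp add: mult_left_mono mult.assoc)
  have ycoup: "2 * L * (L / mu * b + ?\<sigma> * a) * b + e\<^sup>2 / \<alpha> / 8 \<le> 27 / 32 * (b\<^sup>2 / \<alpha>) + 9 / 64 * (a\<^sup>2 / c)"
  proof (rule y_coupling_bound[OF c(1) _ \<alpha> L_pos two_L_le_mu])
    have "c * (4 * L) \<le> c * (p + L)" using c p_gt by (intro mult_left_mono) auto
    then show "4 * c * L \<le> 1" using c by linarith
  qed (use dist(1) in \<open>simp_all add: e_def a_def b_def\<close>)
  have zcoup: "p * s\<^sup>2 / 2 + 2 * p * Q * s \<le> 23 / 36 * (p * s\<^sup>2 / \<beta>) + a\<^sup>2 / c / 8 + e\<^sup>2 / \<alpha> / 16"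
    by (rule z_coupling_bound[OF c(1) \<alpha>(1) \<beta>(1) p_pos mu_pos less_imp_le[OF C] _ _ \<beta>(2)
          less_beta_maxD[OF c(1) \<alpha>(1) C \<beta>(3)] _ EB[folded e_def]])
      (use dist(3,4) in \<open>simp_all add: s_def Q_def a_def e_def mult_ac\<close>)
  have combine: "\<Delta> \<ge> A / 2 + Y1 + Y2 + Z1 - S2 - Z2 \<Longrightarrow> B \<le> Y1 \<Longrightarrow> - Ly \<le> Y2 \<Longrightarrow> Z1 = S
      \<Longrightarrow> Z2 \<le> ZQ \<Longrightarrow> Ly + E / 8 \<le> 27 / 32 * B + 9 / 64 * A \<Longrightarrow> S2 + ZQ \<le> 23 / 36 * S + A / 8 + E / 16
      \<Longrightarrow> 0 \<le> A \<Longrightarrow> 0 \<le> B \<Longrightarrow> 0 \<le> S \<Longrightarrow> \<Delta> \<ge> A / 16 + E / 16 + S / 16"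
    for \<Delta> A B E S Y1 Y2 Z1 S2 Z2 Ly ZQ :: real
    by linarith
  have "p / 2 * s\<^sup>2 = p * s\<^sup>2 / 2" by simp
  then have "phi F p x y z - phi F p x' y' z' \<ge> a\<^sup>2 / c / 16 + e\<^sup>2 / \<alpha> / 16 + p * s\<^sup>2 / \<beta> / 16"
    using combine[OF dec Y1 Y2 Z1 Z2 ycoup] zcoup c(1) \<alpha>(1) \<beta>(1) p_pos by simp
  then show ?thesis by (simp add: a_def e_def s_def yplus_def)
qed

lemma alpha_prox_factor_bound:
  assumes c: "0 < c" and \<alpha>: "\<alpha> < c\<^sup>2 * (p - L)\<^sup>2 / (4 * L * (1 + c * (p - L))\<^sup>2)"
  shows "\<alpha> * (4 * L * (prox_factor c)\<^sup>2) < 1"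
proof -
  define N where "N = (c * mu)\<^sup>2"
  define D where "D = 4 * L * (1 + c * mu)\<^sup>2"
  have N: "0 < N" using c mu_pos by (simp add: N_def)
  have "0 < 1 + c * mu" using c mu_pos by (simp add: add_pos_pos)
  then have D: "0 < D" using L_pos by (simp add: D_def)
  have "prox_factor c = (1 + c * mu) / (c * mu)"
    using c mu_pos by (simp add: prox_factor_def field_simps)
  then have "4 * L * (prox_factor c)\<^sup>2 = D / N"
    by (simp add: D_def N_def power_divide)
  moreover have "\<alpha> * D < N"
    using \<alpha> D by (simp add: D_def N_def mu_def power_mult_distrib pos_less_divide_eq)
  ultimately show ?thesis using N by (simp add: divide_less_eq)
qed

lemma Pfun_sublevel_bound:
  assumes b: "\<And>x. b \<le> psi F x" and bls: "bounded_level_sets F"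
  obtains R where "\<And>z. Pfun F p z \<le> \<Phi> \<Longrightarrow> norm z \<le> R"
proof -
  have "bounded {x. psi F x \<le> max \<Phi> 1}" using bls by (simp add: bounded_level_sets_def)
  then obtain M where M: "\<And>x. psi F x \<le> max \<Phi> 1 \<Longrightarrow> norm x \<le> M"
    unfolding bounded_iff by blast
  have "norm z \<le> M + sqrt (2 * max 0 (\<Phi> - b) / p)" if "Pfun F p z \<le> \<Phi>" for z
  proof -
    let ?x = "xstar z"
    have K: "psi F ?x + p / 2 * (norm (?x - z))\<^sup>2 \<le> \<Phi>"
      using that by (simp add: Pfun_eq_Kmax_xstar Kmax_def)
    moreover have "0 \<le> p / 2 * (norm (?x - z))\<^sup>2" using p_pos by simp
    ultimately have "psi F ?x \<le> max \<Phi> 1" by linarith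
    then have x_bound: "norm ?x \<le> M" by (rule M)
    have "p / 2 * (norm (?x - z))\<^sup>2 \<le> max 0 (\<Phi> - b)" using K b[of ?x] by linarith
    then have "(norm (?x - z))\<^sup>2 \<le> 2 * max 0 (\<Phi> - b) / p" using p_pos by (simp add: field_simps)
    then have "norm (?x - z) \<le> sqrt (2 * max 0 (\<Phi> - b) / p)" by (simp add: real_le_rsqrt)
    then show ?thesis using x_bound norm_triangle_sub[of z ?x] by (simp add: norm_minus_commute)
  qed
  then show ?thesis using that by blast
qed

lemma smoothed_gda_descent:
  assumes c: "0 < c" "c * (p + L) \<le> 1"
    and \<alpha>: "0 < \<alpha>" "\<alpha> * (11 * L) < 1" "\<alpha> * (4 * L * (prox_factor c)\<^sup>2) < 1"
    and \<beta>: "0 < \<beta>" "\<beta> \<le> 1 / 36" "\<beta> < beta_max c \<alpha> C" and C: "0 < C"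
    and EB: "\<And>y. y \<in> prob_simplex \<Longrightarrow> (norm (primal_gap \<alpha> y (zs t)))\<^sup>2
      \<le> 1 / 128 * (norm (zs t - xm y (zs t)))\<^sup>2 + C * (norm (y - yplus \<alpha> y (zs t)))\<^sup>2"
    and gda: "smoothed_gda F gF p c \<alpha> \<beta> xs ys zs" and ys: "ys t \<in> prob_simplex"
  shows "phi F p (xs t) (ys t) (zs t) - phi F p (xs (Suc t)) (ys (Suc t)) (zs (Suc t))
    \<ge> 1 / (16 * c) * (norm (xs t - xs (Suc t)))\<^sup>2
      + 1 / (16 * \<alpha>) * (norm (ys t - proj_simplex (ys t + \<alpha> *\<^sub>R F (xm (ys t) (zs t)))))\<^sup>2
      + p / (16 * \<beta>) * (norm (zs t - zs (Suc t)))\<^sup>2"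
  by (rule descent_step[OF c \<alpha> \<beta> C ys EB[OF ys]]) (use gda in \<open>simp_all add: smoothed_gda_def\<close>)

lemma smoothed_gda_z_bounded:
  assumes pos: "0 < c" "0 < \<alpha>" "0 < \<beta>"
    and gda: "smoothed_gda F gF p c \<alpha> \<beta> xs ys zs" and y0: "ys 0 \<in> prob_simplex"
    and level: "\<And>z. Pfun F p z \<le> phi F p (xs 0) (ys 0) (zs 0) \<Longrightarrow> norm z \<le> R"
    and descent: "\<And>t. norm (zs t) \<le> R \<Longrightarrow>
      phi F p (xs t) (ys t) (zs t) - phi F p (xs (Suc t)) (ys (Suc t)) (zs (Suc t))
      \<ge> 1 / (16 * c) * (norm (xs t - xs (Suc t)))\<^sup>2
        + 1 / (16 * \<alpha>) * (norm (ys t - proj_simplex (ys t + \<alpha> *\<^sub>R F (xm (ys t) (zs t)))))\<^sup>2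
        + p / (16 * \<beta>) * (norm (zs t - zs (Suc t)))\<^sup>2"
  shows "norm (zs t) \<le> R"
proof (rule descent_invariant[where f = "\<lambda>t. phi F p (xs t) (ys t) (zs t)" and g = "\<lambda>t. Pfun F p (zs t)"])
  show "Pfun F p (zs t) \<le> phi F p (xs t) (ys t) (zs t)" for t
    by (rule Pfun_le_phi[OF smoothed_gda_ys_in_prob_simplex[OF gda y0]])
  show "phi F p (xs (Suc t)) (ys (Suc t)) (zs (Suc t)) \<le> phi F p (xs t) (ys t) (zs t)"
    if "norm (zs t) \<le> R" for t
  proof -
    have "0 \<le> 1 / (16 * c) * (norm (xs t - xs (Suc t)))\<^sup>2
        + 1 / (16 * \<alpha>) * (norm (ys t - proj_simplex (ys t + \<alpha> *\<^sub>R F (xm (ys t) (zs t)))))\<^sup>2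
        + p / (16 * \<beta>) * (norm (zs t - zs (Suc t)))\<^sup>2"
      using pos p_pos by (intro add_nonneg_nonneg mult_nonneg_nonneg) auto
    then show ?thesis using descent[OF that] by linarith
  qed
qed (use level in auto)

lemma smoothed_gda_sufficient_decrease:
  assumes c: "0 < c" "c * (p + L) \<le> 1"
    and \<alpha>: "0 < \<alpha>" "\<alpha> * (11 * L) < 1" "\<alpha> * (4 * L * (prox_factor c)\<^sup>2) < 1"
    and \<beta>: "0 < \<beta>" "\<beta> \<le> 1 / 36" "\<beta> < beta_max c \<alpha> C" and C: "0 < C"
    and EB: "\<forall>y z. y \<in> prob_simplex \<longrightarrow> norm z \<le> R' \<longrightarrow>
      (norm (primal_gap \<alpha> y z))\<^sup>2 \<le> 1 / 128 * (norm (z - xm y z))\<^sup>2 + C * (norm (y - yplus \<alpha> y z))\<^sup>2"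
    and gda: "smoothed_gda F gF p c \<alpha> \<beta> xs ys zs" and y0: "ys 0 \<in> prob_simplex"
    and "R \<le> R'" and level: "\<And>z. bounded_level_sets F \<Longrightarrow>
      Pfun F p z \<le> phi F p (xs 0) (ys 0) (zs 0) \<Longrightarrow> norm z \<le> R'"
    and bounded: "bounded_level_sets F \<or> (\<forall>t. norm (zs t) \<le> R)"
  shows "phi F p (xs t) (ys t) (zs t) - phi F p (xs (Suc t)) (ys (Suc t)) (zs (Suc t))
    \<ge> 1 / (16 * c) * (norm (xs t - xs (Suc t)))\<^sup>2
      + 1 / (16 * \<alpha>) * (norm (ys t - proj_simplex (ys t + \<alpha> *\<^sub>R F (xm (ys t) (zs t)))))\<^sup>2
      + p / (16 * \<beta>) * (norm (zs t - zs (Suc t)))\<^sup>2"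
proof -
  note descent = smoothed_gda_descent[OF c \<alpha> \<beta> C _ gda smoothed_gda_ys_in_prob_simplex[OF gda y0]]
  have "norm (zs t) \<le> R'" for t
  proof (cases "\<forall>t. norm (zs t) \<le> R")
    case False
    with bounded have "bounded_level_sets F" by blast
    then show ?thesis
      by (intro smoothed_gda_z_bounded[OF c(1) \<alpha>(1) \<beta>(1) gda y0] descent) (use level EB in auto)
  qed (use \<open>R \<le> R'\<close> in \<open>meson order.trans\<close>)
  then show ?thesis by (intro descent) (use EB in blast)
qed

end

theorem proposition3:
  fixes F :: "real^'n \<Rightarrow> real^'m"
    and gF :: "'m \<Rightarrow> real^'n \<Rightarrow> real^'n"
    and L p c \<alpha> R :: real
    and x0 z0 :: "real^'n" and y0 :: "real^'m"
  assumes deriv: "\<And>i x. ((\<lambda>u. F u $ i) has_derivative (\<lambda>h. gF i x \<bullet> h)) (at x)"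
    and L_pos: "L > 0"
    and lip_x: "\<And>x x' y y'. y \<in> prob_simplex \<Longrightarrow> y' \<in> prob_simplex \<Longrightarrow>
        norm (gradx_f gF x y - gradx_f gF x' y') \<le> L * norm ((x, y) - (x', y'))"
    and lip_y: "\<And>x x' (y::real^'m) y'. y \<in> prob_simplex \<Longrightarrow> y' \<in> prob_simplex \<Longrightarrow>
        norm (F x - F x') \<le> L * norm ((x, y) - (x', y'))"
    and psi_bdd: "\<exists>b. \<forall>x. b \<le> psi F x"
    and sc: "strict_complementarity F gF"
    and p: "p > 3 * L"
    and c: "0 < c" "c < 1 / (p + L)"
    and \<alpha>: "0 < \<alpha>" "\<alpha> < min (1 / (11 * L)) (c\<^sup>2 * (p - L)\<^sup>2 / (4 * L * (1 + c * (p - L))\<^sup>2))"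
    and y0: "y0 \<in> prob_simplex"
  shows "\<exists>\<beta>'>0. \<forall>\<beta> xs ys zs.
           0 < \<beta> \<and> \<beta> \<le> min (1 / 36) ((p - L)\<^sup>2 / (384 * p * (p + L)\<^sup>2)) \<and> \<beta> < \<beta>' \<and>
           xs 0 = x0 \<and> ys 0 = y0 \<and> zs 0 = z0 \<and>
           smoothed_gda F gF p c \<alpha> \<beta> xs ys zs \<and>
           (bounded_level_sets F \<or> (\<forall>t. norm (zs t) \<le> R))
         \<longrightarrow> (\<forall>t. phi F p (xs t) (ys t) (zs t) - phi F p (xs (Suc t)) (ys (Suc t)) (zs (Suc t))
                 \<ge> 1 / (16 * c) * (norm (xs t - xs (Suc t)))\<^sup>2
                   + 1 / (16 * \<alpha>) * (norm (ys t - proj_simplex (ys t + \<alpha> *\<^sub>R F (xopt F p (ys t) (zs t)))))\<^sup>2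
                   + p / (16 * \<beta>) * (norm (zs t - zs (Suc t)))\<^sup>2)"
proof -
  have F_lipschitz: "norm (F x - F x') \<le> L * norm (x - x')" for x x'
    using lip_y[OF y0 y0, of x x'] by (simp add: norm_Pair)
  interpret sgda F gF L p
    using deriv L_pos lip_x F_lipschitz p by unfold_locales
  obtain b where b: "\<And>x. b \<le> psi F x" using psi_bdd by blast
  obtain Rb where "R \<le> Rb"
    and level: "\<And>z. bounded_level_sets F \<Longrightarrow> Pfun F p z \<le> phi F p x0 y0 z0 \<Longrightarrow> norm z \<le> Rb"
    using Pfun_sublevel_bound[OF b] by (metis max.cobounded1 max.coboundedI2 order.refl)
  obtain C where C: "C > 0" and EB: "\<forall>y z. y \<in> prob_simplex \<longrightarrow> norm z \<le> Rb \<longrightarrow>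
      (norm (primal_gap \<alpha> y z))\<^sup>2
      \<le> 1 / 128 * (norm (z - xopt F p y z))\<^sup>2 + C * (norm (y - yplus \<alpha> y z))\<^sup>2"
    using error_bound[OF sc \<alpha>(1), of "1 / 128" Rb] by auto
  have c': "c * (p + L) \<le> 1" using c p_pos L_pos by (simp add: field_simps)
  have \<alpha>': "\<alpha> * (11 * L) < 1" "\<alpha> * (4 * L * (prox_factor c)\<^sup>2) < 1"
    using \<alpha> L_pos alpha_prox_factor_bound[OF c(1), of \<alpha>] by (simp_all add: field_simps)
  show ?thesis
    by (intro exI[of _ "beta_max c \<alpha> C"] conjI allI impI beta_max_pos[OF c(1) \<alpha>(1) C]
        smoothed_gda_sufficient_decrease[OF c(1) c' \<alpha>(1) \<alpha>' _ _ _ C EB _ _ \<open>R \<le> Rb\<close>])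
      (use y0 level in auto)
qed

end
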